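(* Assume the setting below and that the ranking probabilities form a dual culture: $p_r=p_{r'}$ whenever ranking $r'$ is the reversal of ranking $r$; assume also that every correlation matrix $R_i$ is well defined. Then $\lambda_{ij}=0$ for all $i\ne j$, and $$\lim_{n\to\infty}P(n,m)=\sum_{i=1}^m L(0,0,\dots,0;R_i),$$ where each $L$ has $m-1$ zero arguments, i.e. each term is the positive orthant probability of an $(m-1)$-dimensional centered normal vector with correlation matrix $R_i$.
   Context: There are $m\ge 2$ candidates $C_1,\dots,C_m$ and $K=m!$ strict rankings, indexed $r=1,\dots,K$. Each of $n$ voters independently chooses ranking $r$ with probability $p_r$; $N_r$ is the number of voters choosing $r$. For $i\ne j$, $a_{r,(i,j)}=1$ if ranking $r$ places $C_i$ above $C_j$, else $-1$. $C_i$ is a Condorcet winner if $\sum_r a_{r,(i,j)}N_r\ge1$ for all $j\ne i$; $P(n,m)$ is the probability that some candidate is a Condorcet winner. $\lambda_{ij}=\sum_r a_{r,(i,j)}p_r$. For distinct $i,j,l$, $a_{r,(i,j),l}=1$ if in ranking $r$ $C_i$ is above both $C_j,C_l$ or below both, else $-1$; $R^{(i)}_{jl}=(\sum_r a_{r,(i,j),l}p_r-\lambda_{ij}\lambda_{il})/\sqrt{(1-\lambda_{ij}^2)(1-\lambda_{il}^2)}$, $R^{(i)}_{jj}=1$, $R_i=(R^{(i)}_{jl})_{j,l\ne i}$. $L(0,\dots,0;R)=P(Z_1\ge0,\dots,Z_d\ge0)$ for $Z\sim N(0,R)$. *)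

theory Defs
  imports "HOL-Probability.Probability" "HOL-Combinatorics.Permutations"
begin

text \<open>Candidates are 0,...,m-1. A strict ranking is a permutation sigma of {..<m};
  sigma i is the position of candidate i (smaller position = ranked higher).\<close>

definition rankings :: "nat \<Rightarrow> (nat \<Rightarrow> nat) set" where
  "rankings m = {\<sigma>. \<sigma> permutes {..<m}}"

definition rev_rank :: "nat \<Rightarrow> (nat \<Rightarrow> nat) \<Rightarrow> (nat \<Rightarrow> nat)" where
  "rev_rank m \<sigma> = (\<lambda>i. if i < m then m - 1 - \<sigma> i else i)"

definition pref :: "(nat \<Rightarrow> nat) \<Rightarrow> nat \<Rightarrow> nat \<Rightarrow> real" where
  "pref \<sigma> i j = (if \<sigma> i < \<sigma> j then 1 else -1)"

definition pref3 :: "(nat \<Rightarrow> nat) \<Rightarrow> nat \<Rightarrow> nat \<Rightarrow> nat \<Rightarrow> real" where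
  "pref3 \<sigma> i j l =
     (if (\<sigma> i < \<sigma> j \<and> \<sigma> i < \<sigma> l) \<or> (\<sigma> j < \<sigma> i \<and> \<sigma> l < \<sigma> i) then 1 else -1)"

definition Ncount :: "nat \<Rightarrow> (nat \<Rightarrow> (nat \<Rightarrow> nat)) \<Rightarrow> (nat \<Rightarrow> nat) \<Rightarrow> nat" where
  "Ncount n v \<sigma> = card {k \<in> {..<n}. v k = \<sigma>}"

definition condorcet_winner :: "nat \<Rightarrow> nat \<Rightarrow> (nat \<Rightarrow> (nat \<Rightarrow> nat)) \<Rightarrow> nat \<Rightarrow> bool" where
  "condorcet_winner n m v i \<longleftrightarrow>
     (\<forall>j<m. j \<noteq> i \<longrightarrow> (\<Sum>\<sigma>\<in>rankings m. pref \<sigma> i j * real (Ncount n v \<sigma>)) \<ge> 1)"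

definition Pcw :: "((nat \<Rightarrow> nat) \<Rightarrow> real) \<Rightarrow> nat \<Rightarrow> nat \<Rightarrow> real" where
  "Pcw p n m =
     (\<Sum>v\<in>Pi\<^sub>E {..<n} (\<lambda>_. rankings m).
        (\<Prod>k<n. p (v k)) * (if \<exists>i<m. condorcet_winner n m v i then 1 else 0))"

definition lam :: "((nat \<Rightarrow> nat) \<Rightarrow> real) \<Rightarrow> nat \<Rightarrow> nat \<Rightarrow> nat \<Rightarrow> real" where
  "lam p m i j = (\<Sum>\<sigma>\<in>rankings m. pref \<sigma> i j * p \<sigma>)"

text \<open>The correlation matrix R_i, indexed by j,l in {..<m} - {i}.\<close>
definition Rmat :: "((nat \<Rightarrow> nat) \<Rightarrow> real) \<Rightarrow> nat \<Rightarrow> nat \<Rightarrow> nat \<Rightarrow> nat \<Rightarrow> real" where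
  "Rmat p m i j l =
     (if j = l then 1
      else ((\<Sum>\<sigma>\<in>rankings m. pref3 \<sigma> i j l * p \<sigma>) - lam p m i j * lam p m i l)
           / sqrt ((1 - (lam p m i j)\<^sup>2) * (1 - (lam p m i l)\<^sup>2)))"

text \<open>Centered normal vector Z indexed by finite set J with covariance matrix R:
  Z = A W with W standard normal on J and A A^T = R. The orthant probability
  L(0,...,0;R) = P(Z_j >= 0 for all j in J); it does not depend on the choice of A.\<close>
definition std_gauss :: "nat set \<Rightarrow> (nat \<Rightarrow> real) measure" where
  "std_gauss J = PiM J (\<lambda>_. density lborel std_normal_density)"

definition orthant_prob :: "nat set \<Rightarrow> (nat \<Rightarrow> nat \<Rightarrow> real) \<Rightarrow> real" where
  "orthant_prob J R =
     (let A = (SOME A :: nat \<Rightarrow> nat \<Rightarrow> real.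
                 \<forall>j\<in>J. \<forall>l\<in>J. (\<Sum>k\<in>J. A j k * A l k) = R j l)
      in measure (std_gauss J)
           {w \<in> space (std_gauss J). \<forall>j\<in>J. (\<Sum>k\<in>J. A j k * w k) \<ge> 0})"

end

theory Submission
  imports Defs
begin

(*
  Under a dual culture each pairwise margin is symmetric in law, so every lambda_ij vanishes.
  Candidate i is the Condorcet winner iff all m - 1 normalized margins
  Y_j = n^(-1/2) * sum_k a_(v_k,(i,j)) are positive, and there is at most one winner, so P(n,m)
  is the sum over i of these orthant probabilities. The margin vector is a normalized sum of
  i.i.d. centred vectors with covariance R_i, and the multivariate central limit theorem turns
  each term into the Gaussian orthant probability; the boundary of the orthant is negligible
  because every coordinate of the limit is standard normal.
  The central limit theorem is proved from scratch: the characteristic functions converge, hence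
  expectations of trigonometric polynomials converge; products of continuous ramps are
  approximated by trigonometric polynomials uniformly on a cube (Weierstrass approximation after
  substituting cos), Chebyshev bounds control the mass outside the cube, and ramps squeeze the
  orthant indicator.
*)

section \<open>Standard Gaussian vectors\<close>

definition mat_apply :: "(nat \<Rightarrow> nat \<Rightarrow> real) \<Rightarrow> nat set \<Rightarrow> (nat \<Rightarrow> real) \<Rightarrow> nat \<Rightarrow> real" where
  "mat_apply A J w j = (\<Sum>k\<in>J. A j k * w k)"

lemma cis_sum: "finite J \<Longrightarrow> cis (\<Sum>k\<in>J. f k) = (\<Prod>k\<in>J. cis (f k))"
  by (induction J rule: finite_induct) (auto simp: cis_mult[symmetric] add.commute)

global_interpretation std_gauss: prob_space "std_gauss J" for J
  unfolding std_gauss_def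
  by (intro prob_space_PiM) (simp add: real_dist_normal_dist real_distribution.axioms(1))

lemma borel_measurable_cis[measurable]: "cis \<in> borel_measurable borel"
  by (intro borel_measurable_continuous_onI continuous_intros)

lemma borel_measurable_linear_form_std_gauss[measurable]:
  "(\<lambda>w. \<Sum>k\<in>J. b k * w k) \<in> borel_measurable (std_gauss J)"
  unfolding std_gauss_def by measurable

lemma borel_measurable_mat_apply_std_gauss[measurable]:
  "(\<lambda>w. mat_apply A J w j) \<in> borel_measurable (std_gauss J)"
  unfolding mat_apply_def by measurable

lemma char_std_gauss:
  assumes "finite J"
  shows "(\<integral>w. cis (\<Sum>k\<in>J. c k * w k) \<partial>std_gauss J) = exp (-(\<Sum>k\<in>J. (c k)\<^sup>2) / 2)"
proof -
  interpret N: prob_space std_normal_distribution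
    by (simp add: real_dist_normal_dist real_distribution.axioms(1))
  interpret P: product_prob_space "\<lambda>_. std_normal_distribution" ..
  have "(\<integral>w. cis (\<Sum>k\<in>J. c k * w k) \<partial>std_gauss J)
      = (\<integral>w. (\<Prod>k\<in>J. cis (c k * w k)) \<partial>Pi\<^sub>M J (\<lambda>_. std_normal_distribution))"
    unfolding std_gauss_def using assms by (simp add: cis_sum)
  also have "\<dots> = (\<Prod>k\<in>J. char std_normal_distribution (c k))"
    using assms unfolding char_def
    by (subst P.product_integral_prod)
       (auto intro!: N.integrable_const_bound[where B=1] borel_measurable_continuous_onI
             continuous_intros simp: cis_conv_exp)
  also have "\<dots> = (\<Prod>k\<in>J. complex_of_real (exp (- (c k)\<^sup>2 / 2)))"
    by (simp add: char_std_normal_distribution)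
  also have "\<dots> = exp (-(\<Sum>k\<in>J. (c k)\<^sup>2) / 2)"
    using assms by (simp add: exp_sum[symmetric] sum_negf sum_divide_distrib[symmetric] flip: of_real_prod)
  finally show ?thesis .
qed

lemma distr_std_gauss_unit_linear_form:
  assumes "finite J" and unit: "(\<Sum>k\<in>J. (b k)\<^sup>2) = 1"
  shows "distr (std_gauss J) borel (\<lambda>w. \<Sum>k\<in>J. b k * w k) = std_normal_distribution"
proof (rule Levy_uniqueness)
  show "real_distribution (distr (std_gauss J) borel (\<lambda>w. \<Sum>k\<in>J. b k * w k))"
    by (intro std_gauss.real_distribution_distr) measurable
  show "char (distr (std_gauss J) borel (\<lambda>w. \<Sum>k\<in>J. b k * w k)) = char std_normal_distribution"
  proof
    fix t
    have "char (distr (std_gauss J) borel (\<lambda>w. \<Sum>k\<in>J. b k * w k)) t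
        = (\<integral>w. cis (\<Sum>k\<in>J. (t * b k) * w k) \<partial>std_gauss J)"
      unfolding char_def
      by (subst integral_distr) (auto simp: cis_conv_exp sum_distrib_left mult.assoc)
    also have "\<dots> = exp (-(\<Sum>k\<in>J. (t * b k)\<^sup>2) / 2)"
      by (rule char_std_gauss[OF assms(1)])
    also have "(\<Sum>k\<in>J. (t * b k)\<^sup>2) = t\<^sup>2"
      using unit by (simp add: power_mult_distrib sum_distrib_left[symmetric])
    finally show "char (distr (std_gauss J) borel (\<lambda>w. \<Sum>k\<in>J. b k * w k)) t = char std_normal_distribution t"
      by (simp add: char_std_normal_distribution)
  qed
qed (rule real_dist_normal_dist)

lemma measure_std_gauss_mat_apply:
  assumes "finite J" and "(\<Sum>k\<in>J. (A j k)\<^sup>2) = 1" and "B \<in> sets borel"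
  shows "measure (std_gauss J) {w \<in> space (std_gauss J). mat_apply A J w j \<in> B}
       = measure std_normal_distribution B"
proof -
  have "measure std_normal_distribution B = measure (distr (std_gauss J) borel (\<lambda>w. mat_apply A J w j)) B"
    using distr_std_gauss_unit_linear_form[OF assms(1,2)] unfolding mat_apply_def by simp
  also have "\<dots> = measure (std_gauss J) ((\<lambda>w. mat_apply A J w j) -` B \<inter> space (std_gauss J))"
    using assms(3) by (subst measure_distr) auto
  finally show ?thesis by (simp add: vimage_def Int_def conj_commute)
qed

lemma std_normal_density_le_1: "std_normal_density x \<le> 1"
proof -
  have "1 / sqrt (2 * pi) \<le> 1"
    using pi_gt3 by (simp add: divide_le_eq real_le_rsqrt)
  then show ?thesis
    unfolding std_normal_density_def by (intro mult_le_one) auto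
qed

lemma measure_std_normal_interval_le:
  assumes "a \<le> b"
  shows "measure std_normal_distribution {x. a \<le> x \<and> x < b} \<le> b - a"
proof -
  have "emeasure std_normal_distribution {x. a \<le> x \<and> x < b}
      = (\<integral>\<^sup>+x. ennreal (std_normal_density x) * indicator {x. a \<le> x \<and> x < b} x \<partial>lborel)"
    by (subst emeasure_density) auto
  also have "\<dots> \<le> (\<integral>\<^sup>+x. indicator {a..<b} x \<partial>lborel)"
    by (intro nn_integral_mono) (auto split: split_indicator simp: std_normal_density_le_1)
  also have "\<dots> = ennreal (b - a)"
    using assms by simp
  finally show ?thesis
    using assms by (simp add: measure_def enn2real_leI)
qed

lemma measure_std_normal_tail_le:
  assumes "0 < L"
  shows "measure std_normal_distribution {x. L \<le> \<bar>x\<bar>} \<le> 1 / L\<^sup>2"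
proof -
  have "measure std_normal_distribution {x \<in> space std_normal_distribution. L\<^sup>2 \<le> x\<^sup>2}
       \<le> (\<integral>x. x\<^sup>2 \<partial>std_normal_distribution) / L\<^sup>2"
    using assms std_normal_distribution_even_moments(2)[of 1]
    by (intro integral_Markov_inequality_measure) auto
  moreover have "{x \<in> space std_normal_distribution. L\<^sup>2 \<le> x\<^sup>2} = {x. L \<le> \<bar>x\<bar>}"
    using assms by (auto simp: abs_le_square_iff[symmetric])
  ultimately show ?thesis
    using std_normal_distribution_even_moments(1)[of 1] by simp
qed

lemma std_gauss_orthant_shift_le:
  fixes c d :: real
  assumes J: "finite J" and unit: "\<forall>j\<in>J. (\<Sum>k\<in>J. (A j k)\<^sup>2) = 1" and "c \<le> d"
  shows "measure (std_gauss J) {w \<in> space (std_gauss J). \<forall>j\<in>J. c \<le> mat_apply A J w j}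
       \<le> measure (std_gauss J) {w \<in> space (std_gauss J). \<forall>j\<in>J. d \<le> mat_apply A J w j} + card J * (d - c)"
proof -
  let ?G = "std_gauss J"
  let ?strip = "\<lambda>j. {w \<in> space ?G. mat_apply A J w j \<in> {x. c \<le> x \<and> x < d}}"
  have "measure ?G {w \<in> space ?G. \<forall>j\<in>J. c \<le> mat_apply A J w j}
      \<le> measure ?G ({w \<in> space ?G. \<forall>j\<in>J. d \<le> mat_apply A J w j} \<union> (\<Union>j\<in>J. ?strip j))"
    using J by (intro std_gauss.finite_measure_mono) (auto simp: not_le)
  also have "\<dots> \<le> measure ?G {w \<in> space ?G. \<forall>j\<in>J. d \<le> mat_apply A J w j} + (\<Sum>j\<in>J. measure ?G (?strip j))"
    using J by (intro order.trans[OF measure_Un_le] add_left_mono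
        std_gauss.finite_measure_subadditive_finite) (auto simp: std_gauss.emeasure_eq_measure)
  also have "(\<Sum>j\<in>J. measure ?G (?strip j)) \<le> (\<Sum>j\<in>J. d - c)"
  proof (intro sum_mono)
    fix j assume "j \<in> J"
    have "{x::real. c \<le> x \<and> x < d} \<in> sets borel"
      by measurable
    then show "measure ?G (?strip j) \<le> d - c"
      using J unit \<open>j \<in> J\<close> \<open>c \<le> d\<close>
      by (simp add: measure_std_gauss_mat_apply measure_std_normal_interval_le del: mem_Collect_eq)
  qed
  finally show ?thesis by simp
qed

lemma std_gauss_tail_le:
  assumes J: "finite J" and unit: "\<forall>j\<in>J. (\<Sum>k\<in>J. (A j k)\<^sup>2) = 1" and "0 < L"
  shows "measure (std_gauss J) {w \<in> space (std_gauss J). \<exists>j\<in>J. L \<le> \<bar>mat_apply A J w j\<bar>} \<le> card J / L\<^sup>2"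
proof -
  let ?G = "std_gauss J"
  have "{w \<in> space ?G. \<exists>j\<in>J. L \<le> \<bar>mat_apply A J w j\<bar>} = (\<Union>j\<in>J. {w \<in> space ?G. mat_apply A J w j \<in> {x. L \<le> \<bar>x\<bar>}})"
    by auto
  also have "measure ?G \<dots> \<le> (\<Sum>j\<in>J. measure ?G {w \<in> space ?G. mat_apply A J w j \<in> {x. L \<le> \<bar>x\<bar>}})"
    using J by (intro std_gauss.finite_measure_subadditive_finite) auto
  also have "\<dots> \<le> (\<Sum>j\<in>J. 1 / L\<^sup>2)"
  proof (intro sum_mono)
    fix j assume "j \<in> J"
    have "{x::real. L \<le> \<bar>x\<bar>} \<in> sets borel"
      by measurable
    then show "measure ?G {w \<in> space ?G. mat_apply A J w j \<in> {x. L \<le> \<bar>x\<bar>}} \<le> 1 / L\<^sup>2"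
      using J unit \<open>j \<in> J\<close> \<open>0 < L\<close>
      by (simp add: measure_std_gauss_mat_apply measure_std_normal_tail_le del: mem_Collect_eq)
  qed
  finally show ?thesis by simp
qed

lemma (in finite_measure) measure_le_integral:
  assumes "integrable M f" "U \<in> sets M" "\<And>w. w \<in> space M \<Longrightarrow> indicator U w \<le> f w"
  shows "measure M U \<le> integral\<^sup>L M f"
proof -
  have "measure M U = integral\<^sup>L M (indicator U)"
    using assms(2) sets.sets_into_space by (simp add: Int_absorb2)
  also have "\<dots> \<le> integral\<^sup>L M f"
    using assms by (intro integral_mono) (auto simp: emeasure_eq_measure)
  finally show ?thesis .
qed

lemma (in finite_measure) integral_le_measure:
  assumes "integrable M f" "U \<in> sets M" "\<And>w. w \<in> space M \<Longrightarrow> f w \<le> indicator U w"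
  shows "integral\<^sup>L M f \<le> measure M U"
proof -
  have "integral\<^sup>L M f \<le> integral\<^sup>L M (indicator U)"
    using assms by (intro integral_mono) (auto simp: emeasure_eq_measure)
  also have "\<dots> = measure M U"
    using assms(2) sets.sets_into_space by (simp add: Int_absorb2)
  finally show ?thesis .
qed

section \<open>Normalized sums of i.i.d. steps\<close>

definition iid_expectation ::
    "'b set \<Rightarrow> ('b \<Rightarrow> real) \<Rightarrow> nat \<Rightarrow> ((nat \<Rightarrow> 'b) \<Rightarrow> 'c::real_normed_field) \<Rightarrow> 'c" where
  "iid_expectation S p n g = (\<Sum>v\<in>Pi\<^sub>E {..<n} (\<lambda>_. S). of_real (\<Prod>k<n. p (v k)) * g v)"

definition normalized_sum :: "('b \<Rightarrow> nat \<Rightarrow> real) \<Rightarrow> nat \<Rightarrow> (nat \<Rightarrow> 'b) \<Rightarrow> nat \<Rightarrow> real" where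
  "normalized_sum a n v j = (\<Sum>k<n. a (v k) j) / sqrt n"

lemma iid_expectation_add:
  "iid_expectation S p n (\<lambda>v. f v + g v) = iid_expectation S p n f + iid_expectation S p n g"
  unfolding iid_expectation_def by (simp add: distrib_left sum.distrib)

lemma iid_expectation_diff:
  "iid_expectation S p n (\<lambda>v. f v - g v) = iid_expectation S p n f - iid_expectation S p n g"
  unfolding iid_expectation_def by (simp add: right_diff_distrib sum_subtractf)

lemma iid_expectation_mult_left:
  "iid_expectation S p n (\<lambda>v. c * f v) = c * iid_expectation S p n f"
  unfolding iid_expectation_def by (simp add: sum_distrib_left algebra_simps)

lemma iid_expectation_sum:
  "iid_expectation S p n (\<lambda>v. \<Sum>i\<in>I. f i v) = (\<Sum>i\<in>I. iid_expectation S p n (f i))"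
  unfolding iid_expectation_def by (simp add: sum_distrib_left sum.swap[of _ I])

lemma iid_expectation_of_real:
  "iid_expectation S p n (\<lambda>v. of_real (f v)) = of_real (iid_expectation S p n f)"
  unfolding iid_expectation_def by simp

lemma iid_expectation_prod:
  assumes "finite S"
  shows "iid_expectation S p n (\<lambda>v. \<Prod>k<n. f k (v k)) = (\<Prod>k<n. \<Sum>s\<in>S. of_real (p s) * f k s)"
  using assms
  by (simp add: prod_sum_PiE iid_expectation_def prod.distrib flip: of_real_prod)

lemma iid_expectation_const:
  assumes "finite S" "(\<Sum>s\<in>S. p s) = 1"
  shows "iid_expectation S p n (\<lambda>v. c) = (c :: real)"
  using iid_expectation_prod[OF assms(1), of p n "\<lambda>_ _. 1::real"] iid_expectation_mult_left[of S p n c "\<lambda>_. 1"]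
  by (simp add: assms(2))

lemma iid_expectation_mono:
  assumes "\<forall>s\<in>S. 0 \<le> p s" and "\<And>v. v \<in> Pi\<^sub>E {..<n} (\<lambda>_. S) \<Longrightarrow> f v \<le> g v"
  shows "iid_expectation S p n f \<le> (iid_expectation S p n g :: real)"
  unfolding iid_expectation_def
  using assms by (intro sum_mono mult_left_mono) (auto simp: PiE_iff intro!: prod_nonneg)

lemma norm_iid_expectation_le:
  assumes "\<forall>s\<in>S. 0 \<le> p s"
  shows "norm (iid_expectation S p n f) \<le> iid_expectation S p n (\<lambda>v. norm (f v))"
  unfolding iid_expectation_def
proof (rule order_trans[OF norm_sum], rule sum_mono)
  fix v assume "v \<in> Pi\<^sub>E {..<n} (\<lambda>_. S)"
  then have "0 \<le> (\<Prod>k<n. p (v k))"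
    using assms by (auto simp: PiE_iff intro!: prod_nonneg)
  then show "norm (of_real (\<Prod>k<n. p (v k)) * f v) \<le> of_real (\<Prod>k<n. p (v k)) * norm (f v)"
    by (simp only: norm_mult norm_of_real abs_of_nonneg) (simp add: of_real_def)
qed

lemma iid_expectation_cis_normalized_sum:
  assumes "finite S"
  shows "iid_expectation S p n (\<lambda>v. cis (\<Sum>j\<in>J. t j * normalized_sum a n v j))
       = (\<Sum>s\<in>S. of_real (p s) * cis ((\<Sum>j\<in>J. t j * a s j) / sqrt n)) ^ n"
proof -
  have "(\<Sum>j\<in>J. t j * normalized_sum a n v j) = (\<Sum>k<n. (\<Sum>j\<in>J. t j * a (v k) j) / sqrt n)" for v
    unfolding normalized_sum_def
    by (simp add: sum_divide_distrib[symmetric] sum_distrib_left sum.swap[of _ J])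
  then have "cis (\<Sum>j\<in>J. t j * normalized_sum a n v j) = (\<Prod>k<n. cis ((\<Sum>j\<in>J. t j * a (v k) j) / sqrt n))" for v
    by (simp add: cis_sum)
  then show ?thesis
    using iid_expectation_prod[OF assms, of p n "\<lambda>k s. cis ((\<Sum>j\<in>J. t j * a s j) / sqrt n)"] by simp
qed

lemma iid_expectation_step_product:
  assumes S: "finite S" and p_sum: "(\<Sum>s\<in>S. p s) = 1" and centred: "(\<Sum>s\<in>S. p s * a s) = 0"
    and "k < n" "l < n"
  shows "iid_expectation S p n (\<lambda>v. a (v k) * a (v l))
       = (if k = l then (\<Sum>s\<in>S. p s * (a s)\<^sup>2) else 0)"
proof -
  define f where "f k' s = (if k' = k then a s else 1) * (if k' = l then a s else 1)" for k' s
  have "a (v k) * a (v l) = (\<Prod>k'<n. f k' (v k'))" for v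
    unfolding f_def prod.distrib using \<open>k < n\<close> \<open>l < n\<close> by (simp add: prod.delta)
  then have "iid_expectation S p n (\<lambda>v. a (v k) * a (v l)) = (\<Prod>k'<n. \<Sum>s\<in>S. p s * f k' s)"
    using iid_expectation_prod[OF S, of p n f] by simp
  also have "\<dots> = (if k = l then (\<Sum>s\<in>S. p s * (a s)\<^sup>2) else 0)"
  proof (cases "k = l")
    case True
    have "(\<Sum>s\<in>S. p s * f k' s) = (if k' = k then (\<Sum>s\<in>S. p s * (a s)\<^sup>2) else 1)" for k'
      using True p_sum by (simp add: f_def power2_eq_square)
    then show ?thesis
      using True \<open>k < n\<close> by (simp add: prod.delta)
  next
    case False
    have "(\<Sum>s\<in>S. p s * f k s) = 0"
      using False centred by (simp add: f_def)
    then show ?thesis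
      using False \<open>k < n\<close> by (metis finite_lessThan lessThan_iff prod_zero)
  qed
  finally show ?thesis .
qed

lemma iid_expectation_normalized_sum_sq:
  assumes S: "finite S" and p_sum: "(\<Sum>s\<in>S. p s) = 1" and centred: "(\<Sum>s\<in>S. p s * a s j) = 0"
    and "0 < n"
  shows "iid_expectation S p n (\<lambda>v. (normalized_sum a n v j)\<^sup>2) = (\<Sum>s\<in>S. p s * (a s j)\<^sup>2)"
proof -
  have "(normalized_sum a n v j)\<^sup>2 = (\<Sum>k<n. a (v k) j)\<^sup>2 / real n" for v
    unfolding normalized_sum_def power_divide by simp
  then have "(normalized_sum a n v j)\<^sup>2 = (\<Sum>k<n. \<Sum>l<n. a (v k) j * a (v l) j) / real n" for v
    by (simp only: power2_eq_square sum_product)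
  then have "iid_expectation S p n (\<lambda>v. (normalized_sum a n v j)\<^sup>2)
      = (\<Sum>k<n. \<Sum>l<n. iid_expectation S p n (\<lambda>v. a (v k) j * a (v l) j)) / real n"
    using iid_expectation_mult_left[of S p n "1 / real n"] by (simp add: iid_expectation_sum)
  also have "\<dots> = (\<Sum>k<n. \<Sum>l<n. if k = l then (\<Sum>s\<in>S. p s * (a s j)\<^sup>2) else 0) / real n"
    using iid_expectation_step_product[OF S p_sum, of "\<lambda>s. a s j"] centred by simp
  also have "\<dots> = (\<Sum>s\<in>S. p s * (a s j)\<^sup>2)"
    using \<open>0 < n\<close> by simp
  finally show ?thesis .
qed

lemma iid_expectation_normalized_sum_tail_le:
  fixes L :: real
  assumes S: "finite S" and p_nonneg: "\<forall>s\<in>S. 0 \<le> p s" and p_sum: "(\<Sum>s\<in>S. p s) = 1"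
    and centred: "\<forall>j\<in>J. (\<Sum>s\<in>S. p s * a s j) = 0" and "finite J" and "0 < L"
  shows "iid_expectation S p n (\<lambda>v. if \<exists>j\<in>J. L \<le> \<bar>normalized_sum a n v j\<bar> then 1 else 0)
       \<le> (\<Sum>j\<in>J. \<Sum>s\<in>S. p s * (a s j)\<^sup>2) / L\<^sup>2"
proof (cases "n = 0")
  case True
  have "0 \<le> (\<Sum>j\<in>J. \<Sum>s\<in>S. p s * (a s j)\<^sup>2)"
    using p_nonneg by (intro sum_nonneg) auto
  then show ?thesis
    using True \<open>0 < L\<close> by (simp add: iid_expectation_def normalized_sum_def)
next
  case False
  let ?Y = "normalized_sum a n"
  have "(if \<exists>j\<in>J. L \<le> \<bar>?Y v j\<bar> then 1 else 0) \<le> (\<Sum>j\<in>J. (?Y v j)\<^sup>2 / L\<^sup>2)" for v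
  proof (cases "\<exists>j\<in>J. L \<le> \<bar>?Y v j\<bar>")
    case True
    then obtain j where "j \<in> J" "L \<le> \<bar>?Y v j\<bar>" by blast
    then have "1 \<le> (?Y v j)\<^sup>2 / L\<^sup>2"
      using \<open>0 < L\<close> by (simp add: abs_le_square_iff[symmetric])
    also have "\<dots> \<le> (\<Sum>j\<in>J. (?Y v j)\<^sup>2 / L\<^sup>2)"
      using \<open>finite J\<close> \<open>j \<in> J\<close> by (intro member_le_sum) auto
    finally show ?thesis using True by simp
  qed (simp add: sum_nonneg)
  then have "iid_expectation S p n (\<lambda>v. if \<exists>j\<in>J. L \<le> \<bar>?Y v j\<bar> then 1 else 0)
      \<le> iid_expectation S p n (\<lambda>v. \<Sum>j\<in>J. (?Y v j)\<^sup>2 / L\<^sup>2)"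
    by (intro iid_expectation_mono[OF p_nonneg])
  also have "\<dots> = (\<Sum>j\<in>J. iid_expectation S p n (\<lambda>v. (?Y v j)\<^sup>2)) / L\<^sup>2"
    using iid_expectation_mult_left[of S p n "1 / L\<^sup>2"]
    by (simp add: iid_expectation_sum sum_divide_distrib)
  also have "\<dots> = (\<Sum>j\<in>J. \<Sum>s\<in>S. p s * (a s j)\<^sup>2) / L\<^sup>2"
    using iid_expectation_normalized_sum_sq[OF S p_sum] centred False by simp
  finally show ?thesis .
qed

section \<open>Convergence of characteristic functions\<close>

lemma tendsto_const_div_sqrt_0: "(\<lambda>n. c / sqrt (real n)) \<longlonglongrightarrow> 0"
proof -
  have "(\<lambda>n. c * sqrt (inverse (real n))) \<longlonglongrightarrow> c * sqrt 0"
    by (intro tendsto_intros tendsto_inverse_0_at_top filterlim_real_sequentially)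
  then show ?thesis
    by (simp add: real_sqrt_inverse divide_inverse)
qed

lemma tendsto_cis_second_order:
  "(\<lambda>n. of_nat n * (cis (x / sqrt n) - 1 - \<i> * of_real (x / sqrt n))) \<longlonglongrightarrow> complex_of_real (- x\<^sup>2 / 2)"
proof -
  have bound: "norm (of_nat n * (cis (x / sqrt n) - 1 - \<i> * of_real (x / sqrt n)) - of_real (- x\<^sup>2 / 2))
          \<le> \<bar>x\<bar> ^ 3 / 6 / sqrt n" if "0 < n" for n
  proof -
    define y where "y = x / sqrt n"
    have "real n * y\<^sup>2 = x\<^sup>2"
      using \<open>0 < n\<close> by (simp add: y_def power_divide)
    then have x2: "complex_of_real (- x\<^sup>2 / 2) = - of_nat n * of_real (y\<^sup>2) / 2"
      by (simp flip: \<open>real n * y\<^sup>2 = x\<^sup>2\<close>)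
    have taylor2: "(\<Sum>k\<le>2. (\<i> * complex_of_real y) ^ k / fact k) = 1 + \<i> * y - of_real (y\<^sup>2) / 2"
      by (simp add: eval_nat_numeral power2_eq_square algebra_simps)
    have "of_nat n * (cis y - 1 - \<i> * of_real y) - of_real (- x\<^sup>2 / 2)
        = of_nat n * (iexp y - (\<Sum>k\<le>2. (\<i> * y) ^ k / fact k))"
      unfolding x2 taylor2 cis_conv_exp by (simp add: algebra_simps)
    also have "norm \<dots> = n * norm (iexp y - (\<Sum>k\<le>2. (\<i> * y) ^ k / fact k))"
      by (simp add: norm_mult)
    also have "\<dots> \<le> n * (\<bar>y\<bar> ^ 3 / fact 3)"
      using iexp_approx1[of y 2] by (intro mult_left_mono) (auto simp: eval_nat_numeral)
    also have "\<dots> = \<bar>x\<bar> ^ 3 / 6 / sqrt n"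
    proof -
      have "\<bar>y\<bar> ^ 3 = \<bar>x\<bar> ^ 3 / (sqrt n) ^ 3"
        by (simp add: y_def power_divide abs_div)
      moreover have "(sqrt n) ^ 3 = n * sqrt n"
        by (simp add: eval_nat_numeral)
      moreover have "0 < sqrt n"
        using \<open>0 < n\<close> by simp
      ultimately show ?thesis
        using \<open>0 < n\<close> by (simp add: fact_numeral field_simps)
    qed
    finally show ?thesis unfolding y_def .
  qed
  have "(\<lambda>n. of_nat n * (cis (x / sqrt n) - 1 - \<i> * of_real (x / sqrt n)) - of_real (- x\<^sup>2 / 2)) \<longlonglongrightarrow> 0"
    by (rule Lim_null_comparison[OF _ tendsto_const_div_sqrt_0[of "\<bar>x\<bar> ^ 3 / 6"]])
      (use bound in \<open>auto intro!: eventually_sequentiallyI[of 1]\<close>)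
  then show ?thesis
    by (rule LIM_zero_cancel)
qed

lemma power_tendsto_exp:
  fixes \<phi> :: "nat \<Rightarrow> complex"
  assumes norm_le_1: "\<And>n. norm (\<phi> n) \<le> 1" and "c \<le> 0"
    and lim: "(\<lambda>n. of_nat n * (\<phi> n - 1)) \<longlonglongrightarrow> of_real c"
  shows "(\<lambda>n. \<phi> n ^ n) \<longlonglongrightarrow> of_real (exp c)"
proof -
  let ?\<psi> = "\<lambda>n. 1 + of_real c / of_nat n :: complex"
  have "eventually (\<lambda>n. norm (\<phi> n ^ n - ?\<psi> n ^ n) \<le> norm (of_nat n * (\<phi> n - 1) - of_real c)) sequentially"
  proof (rule eventually_sequentiallyI[of "nat \<lceil>- c\<rceil> + 1"])
    fix n assume n: "nat \<lceil>- c\<rceil> + 1 \<le> n"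
    have "norm (?\<psi> n) = \<bar>1 + c / n\<bar>"
      by (metis norm_of_real of_real_1 of_real_add of_real_divide of_real_of_nat_eq)
    also have "\<dots> \<le> 1"
    proof -
      have "real (nat \<lceil>- c\<rceil> + 1) \<le> real n"
        using n by (simp only: of_nat_le_iff)
      then have "- c < n"
        using real_nat_ceiling_ge[of "- c"] by simp
      then show ?thesis
        using \<open>c \<le> 0\<close> by (auto simp: abs_if field_simps)
    qed
    finally have "norm (\<phi> n ^ n - ?\<psi> n ^ n) \<le> n * norm (\<phi> n - ?\<psi> n)"
      by (intro norm_power_diff norm_le_1)
    also have "\<dots> = norm (of_nat n * (\<phi> n - ?\<psi> n))"
      by (simp add: norm_mult)
    also have "of_nat n * (\<phi> n - ?\<psi> n) = of_nat n * (\<phi> n - 1) - of_real c"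
      using n by (simp add: field_simps)
    finally show "norm (\<phi> n ^ n - ?\<psi> n ^ n) \<le> norm (of_nat n * (\<phi> n - 1) - of_real c)" .
  qed
  moreover have "(\<lambda>n. norm (of_nat n * (\<phi> n - 1) - of_real c)) \<longlonglongrightarrow> 0"
    using lim by (simp add: tendsto_norm_zero_iff LIM_zero_iff)
  ultimately have "(\<lambda>n. \<phi> n ^ n - ?\<psi> n ^ n) \<longlonglongrightarrow> 0"
    by (rule Lim_null_comparison)
  moreover have "(\<lambda>n. ?\<psi> n ^ n) \<longlonglongrightarrow> of_real (exp c)"
    using tendsto_of_real[OF tendsto_exp_limit_sequentially[of c], where 'a=complex] by simp
  ultimately show ?thesis
    by (rule Lim_transform[rotated])
qed

lemma char_normalized_step_power_tendsto:
  assumes S: "finite S" and p_nonneg: "\<forall>s\<in>S. 0 \<le> p s" and p_sum: "(\<Sum>s\<in>S. p s) = 1"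
    and centred: "(\<Sum>s\<in>S. p s * \<theta> s) = 0"
  shows "(\<lambda>n. (\<Sum>s\<in>S. of_real (p s) * cis (\<theta> s / sqrt n)) ^ n)
           \<longlonglongrightarrow> of_real (exp (-(\<Sum>s\<in>S. p s * (\<theta> s)\<^sup>2) / 2))"
proof (rule power_tendsto_exp)
  let ?\<phi> = "\<lambda>n. \<Sum>s\<in>S. of_real (p s) * cis (\<theta> s / sqrt n)"
  show "norm (?\<phi> n) \<le> 1" for n
  proof -
    have "norm (?\<phi> n) \<le> (\<Sum>s\<in>S. norm (of_real (p s) * cis (\<theta> s / sqrt n)))"
      by (rule norm_sum)
    also have "\<dots> = (\<Sum>s\<in>S. p s)"
      using p_nonneg by (intro sum.cong) (auto simp: norm_mult)
    finally show ?thesis using p_sum by simp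
  qed
  show "- (\<Sum>s\<in>S. p s * (\<theta> s)\<^sup>2) / 2 \<le> 0"
    using p_nonneg by (auto intro!: sum_nonneg)
  text \<open>Centring removes the first-order term of the expansion of \<open>cis\<close>.\<close>
  have "of_nat n * (?\<phi> n - 1) = (\<Sum>s\<in>S. of_real (p s) *
       (of_nat n * (cis (\<theta> s / sqrt n) - 1 - \<i> * of_real (\<theta> s / sqrt n))))" for n
  proof -
    have "(\<Sum>s\<in>S. of_real (p s) * (\<i> * of_real (\<theta> s / sqrt n)))
        = \<i> / of_real (sqrt n) * of_real (\<Sum>s\<in>S. p s * \<theta> s)"
      by (simp add: sum_distrib_left algebra_simps)
    then have "(\<Sum>s\<in>S. of_real (p s) * (\<i> * of_real (\<theta> s / sqrt n))) = 0"
      using centred by simp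
    moreover have "(\<Sum>s\<in>S. complex_of_real (p s)) = 1"
      using p_sum by (simp flip: of_real_sum)
    ultimately have "?\<phi> n - 1 = (\<Sum>s\<in>S. of_real (p s) *
        (cis (\<theta> s / sqrt n) - 1 - \<i> * of_real (\<theta> s / sqrt n)))"
      by (simp add: algebra_simps sum_subtractf sum.distrib)
    then show ?thesis
      by (simp add: sum_distrib_left algebra_simps)
  qed
  moreover have "(\<lambda>n. \<Sum>s\<in>S. of_real (p s) *
       (of_nat n * (cis (\<theta> s / sqrt n) - 1 - \<i> * of_real (\<theta> s / sqrt n))))
       \<longlonglongrightarrow> (\<Sum>s\<in>S. of_real (p s) * of_real (- (\<theta> s)\<^sup>2 / 2))"
    by (intro tendsto_sum tendsto_mult_left tendsto_cis_second_order)
  moreover have "(\<Sum>s\<in>S. of_real (p s) * of_real (- (\<theta> s)\<^sup>2 / 2))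
      = complex_of_real (- (\<Sum>s\<in>S. p s * (\<theta> s)\<^sup>2) / 2)"
    by (simp add: sum_divide_distrib sum_negf)
  ultimately show "(\<lambda>n. of_nat n * (?\<phi> n - 1)) \<longlonglongrightarrow> complex_of_real (- (\<Sum>s\<in>S. p s * (\<theta> s)\<^sup>2) / 2)"
    by simp
qed

section \<open>Trigonometric polynomials\<close>

inductive_set trig_polys :: "nat set \<Rightarrow> ((nat \<Rightarrow> real) \<Rightarrow> complex) set" for J where
  cis_linear: "(\<lambda>x. c * cis (\<Sum>j\<in>J. t j * x j)) \<in> trig_polys J"
| add: "f \<in> trig_polys J \<Longrightarrow> g \<in> trig_polys J \<Longrightarrow> (\<lambda>x. f x + g x) \<in> trig_polys J"

lemma trig_polys_const: "(\<lambda>x. c) \<in> trig_polys J"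
  using trig_polys.cis_linear[of c "\<lambda>_. 0" J] by simp

lemma trig_polys_mult:
  assumes "f \<in> trig_polys J" and "g \<in> trig_polys J"
  shows "(\<lambda>x. f x * g x) \<in> trig_polys J"
  using assms
proof (induction f rule: trig_polys.induct)
  case (cis_linear c t)
  from cis_linear.prems show ?case
  proof (induction g rule: trig_polys.induct)
    case (cis_linear c' t')
    have "(\<lambda>x. c * cis (\<Sum>j\<in>J. t j * x j) * (c' * cis (\<Sum>j\<in>J. t' j * x j)))
        = (\<lambda>x. (c * c') * cis (\<Sum>j\<in>J. (t j + t' j) * x j))"
    proof
      fix x
      have "cis (\<Sum>j\<in>J. t j * x j) * cis (\<Sum>j\<in>J. t' j * x j) = cis (\<Sum>j\<in>J. (t j + t' j) * x j)"
        by (simp add: cis_mult distrib_right sum.distrib)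
      then show "c * cis (\<Sum>j\<in>J. t j * x j) * (c' * cis (\<Sum>j\<in>J. t' j * x j))
          = (c * c') * cis (\<Sum>j\<in>J. (t j + t' j) * x j)"
        by (metis mult.assoc mult.left_commute)
    qed
    then show ?case
      by (simp only: trig_polys.cis_linear)
  next
    case (add g1 g2)
    then show ?case
      by (simp add: distrib_left trig_polys.add)
  qed
next
  case (add f1 f2)
  then show ?case
    by (simp add: distrib_right trig_polys.add)
qed

lemma trig_polys_prod:
  "finite I \<Longrightarrow> (\<And>i. i \<in> I \<Longrightarrow> f i \<in> trig_polys J) \<Longrightarrow> (\<lambda>x. \<Prod>i\<in>I. f i x) \<in> trig_polys J"
  by (induction I rule: finite_induct) (auto intro: trig_polys_mult trig_polys_const)

lemma trig_polys_cis_coordinate: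
  assumes "finite J" "j \<in> J"
  shows "(\<lambda>x. cis (\<alpha> * x j + \<beta>)) \<in> trig_polys J"
proof -
  have "cis (\<alpha> * x j + \<beta>) = cis \<beta> * cis (\<Sum>k\<in>J. (if k = j then \<alpha> else 0) * x k)" for x
    using assms by (simp add: if_distrib[of "\<lambda>z. z * _"] cis_mult add.commute cong: if_cong)
  then show ?thesis
    using trig_polys.cis_linear[of "cis \<beta>" "\<lambda>k. if k = j then \<alpha> else 0" J] by simp
qed

lemma trig_polys_cos_coordinate:
  assumes "finite J" "j \<in> J"
  shows "(\<lambda>x. complex_of_real (cos (\<alpha> * x j + \<beta>))) \<in> trig_polys J"
proof -
  have "complex_of_real (cos y) = cis y / 2 + cis (- y) / 2" for y
    by (simp add: cis.ctr complex_eq_iff)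
  then have "complex_of_real (cos (\<alpha> * x j + \<beta>))
      = 1/2 * cis (\<alpha> * x j + \<beta>) + 1/2 * cis ((- \<alpha>) * x j + (- \<beta>))" for x
    by (simp add: minus_add_distrib)
  then show ?thesis
    by (simp only: trig_polys.add trig_polys_mult trig_polys_const trig_polys_cis_coordinate assms)
qed

lemma trig_polys_polynomial_cos_coordinate:
  assumes "real_polynomial_function P" "finite J" "j \<in> J"
  shows "(\<lambda>x. complex_of_real (P (cos (\<alpha> * x j + \<beta>)))) \<in> trig_polys J"
  using assms(1)
proof (induction P rule: real_polynomial_function.induct)
  case (linear f)
  then obtain c where "f = (\<lambda>x. x * c)"
    by (auto simp: real_bounded_linear)
  then show ?case
    using trig_polys_mult[OF trig_polys_cos_coordinate[OF assms(2,3)] trig_polys_const] by simp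
qed (simp_all add: trig_polys_const trig_polys.add trig_polys_mult)

lemma integrable_trig_poly_mat_apply:
  assumes "f \<in> trig_polys J"
  shows "integrable (std_gauss J) (\<lambda>w. f (mat_apply A J w))"
  using assms
proof (induction rule: trig_polys.induct)
  case (cis_linear c t)
  show ?case
    by (intro std_gauss.integrable_const_bound[where B = "norm c"]) (auto simp: norm_mult)
qed (rule Bochner_Integration.integrable_add)

lemma weighted_sum_square_linear_form:
  fixes w :: "'b \<Rightarrow> real" and u :: "'b \<Rightarrow> 'j \<Rightarrow> real"
  shows "(\<Sum>s\<in>S. w s * (\<Sum>j\<in>J. t j * u s j)\<^sup>2)
     = (\<Sum>j\<in>J. \<Sum>l\<in>J. t j * t l * (\<Sum>s\<in>S. w s * u s j * u s l))"
proof -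
  have "w s * (\<Sum>j\<in>J. t j * u s j)\<^sup>2 = (\<Sum>j\<in>J. \<Sum>l\<in>J. t j * t l * (w s * u s j * u s l))" for s
    by (simp add: power2_eq_square sum_product sum_distrib_left mult_ac)
  then have "(\<Sum>s\<in>S. w s * (\<Sum>j\<in>J. t j * u s j)\<^sup>2)
      = (\<Sum>s\<in>S. \<Sum>j\<in>J. \<Sum>l\<in>J. t j * t l * (w s * u s j * u s l))"
    by simp
  also have "\<dots> = (\<Sum>j\<in>J. \<Sum>s\<in>S. \<Sum>l\<in>J. t j * t l * (w s * u s j * u s l))"
    by (rule sum.swap)
  also have "\<dots> = (\<Sum>j\<in>J. \<Sum>l\<in>J. \<Sum>s\<in>S. t j * t l * (w s * u s j * u s l))"
    by (intro sum.cong refl sum.swap)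
  finally show ?thesis
    by (simp add: sum_distrib_left)
qed

lemma sum_linear_form_mat_apply:
  "(\<Sum>j\<in>J. t j * mat_apply A J w j) = (\<Sum>k\<in>J. (\<Sum>j\<in>J. t j * A j k) * w k)"
proof -
  have "(\<Sum>j\<in>J. t j * mat_apply A J w j) = (\<Sum>j\<in>J. \<Sum>k\<in>J. t j * A j k * w k)"
    by (simp add: mat_apply_def sum_distrib_left mult.assoc)
  also have "\<dots> = (\<Sum>k\<in>J. \<Sum>j\<in>J. t j * A j k * w k)"
    by (rule sum.swap)
  finally show ?thesis
    by (simp add: sum_distrib_right)
qed

locale centred_walk =
  fixes S :: "'b set" and p :: "'b \<Rightarrow> real" and a :: "'b \<Rightarrow> nat \<Rightarrow> real"
    and J :: "nat set" and A :: "nat \<Rightarrow> nat \<Rightarrow> real"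
  assumes finite_S: "finite S" and p_nonneg: "\<forall>s\<in>S. 0 \<le> p s" and p_sum: "(\<Sum>s\<in>S. p s) = 1"
    and finite_J: "finite J"
    and centred: "\<forall>j\<in>J. (\<Sum>s\<in>S. p s * a s j) = 0"
    and covariance: "\<forall>j\<in>J. \<forall>l\<in>J. (\<Sum>k\<in>J. A j k * A l k) = (\<Sum>s\<in>S. p s * a s j * a s l)"
begin

lemma quadratic_form_eq:
  "(\<Sum>k\<in>J. (\<Sum>j\<in>J. t j * A j k)\<^sup>2) = (\<Sum>s\<in>S. p s * (\<Sum>j\<in>J. t j * a s j)\<^sup>2)"
  using weighted_sum_square_linear_form[where w = "\<lambda>_. 1" and S = J and u = "\<lambda>k j. A j k"]
    weighted_sum_square_linear_form[where w = p and u = a] covariance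
  by (simp add: mult.assoc)

lemma tendsto_iid_expectation_cis:
  "(\<lambda>n. iid_expectation S p n (\<lambda>v. cis (\<Sum>j\<in>J. t j * normalized_sum a n v j)))
     \<longlonglongrightarrow> (\<integral>w. cis (\<Sum>j\<in>J. t j * mat_apply A J w j) \<partial>std_gauss J)"
proof -
  define \<theta> where "\<theta> s = (\<Sum>j\<in>J. t j * a s j)" for s
  have "(\<Sum>s\<in>S. p s * \<theta> s) = (\<Sum>s\<in>S. \<Sum>j\<in>J. t j * (p s * a s j))"
    unfolding \<theta>_def by (simp add: sum_distrib_left algebra_simps)
  also have "\<dots> = (\<Sum>j\<in>J. t j * (\<Sum>s\<in>S. p s * a s j))"
    by (subst sum.swap) (simp add: sum_distrib_left)
  finally have "(\<Sum>s\<in>S. p s * \<theta> s) = 0"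
    using centred by simp
  then show ?thesis
    using char_normalized_step_power_tendsto[OF finite_S p_nonneg p_sum, of \<theta>]
    by (simp add: iid_expectation_cis_normalized_sum[OF finite_S] char_std_gauss[OF finite_J]
        sum_linear_form_mat_apply quadratic_form_eq \<theta>_def)
qed

lemma tendsto_iid_expectation_trig_poly:
  assumes "f \<in> trig_polys J"
  shows "(\<lambda>n. iid_expectation S p n (\<lambda>v. f (normalized_sum a n v)))
           \<longlonglongrightarrow> (\<integral>w. f (mat_apply A J w) \<partial>std_gauss J)"
  using assms
proof (induction rule: trig_polys.induct)
  case (cis_linear c t)
  then show ?case
    by (simp add: iid_expectation_mult_left tendsto_mult_left tendsto_iid_expectation_cis)
next
  case (add f g)
  then show ?case
    by (simp add: iid_expectation_add integrable_trig_poly_mat_apply tendsto_add)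
qed

lemma tendsto_iid_expectation_real_trig_poly:
  assumes "(\<lambda>x. complex_of_real (F x)) \<in> trig_polys J"
  shows "(\<lambda>n. iid_expectation S p n (\<lambda>v. F (normalized_sum a n v)))
           \<longlonglongrightarrow> (\<integral>w. F (mat_apply A J w) \<partial>std_gauss J)"
  using tendsto_iid_expectation_trig_poly[OF assms]
  unfolding iid_expectation_of_real integral_complex_of_real tendsto_of_real_iff .

end

section \<open>Approximating products of ramps\<close>

lemma arccos_rescaled_range:
  assumes "0 < L" "c \<in> {-1..1}"
  shows "2 * L / pi * arccos c - L \<in> {-L..L}"
proof -
  have "0 \<le> arccos c" "arccos c \<le> pi"
    using assms(2) arccos_bounded by auto
  then have "0 \<le> 2 * L / pi * arccos c" "2 * L / pi * arccos c \<le> 2 * L"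
    using \<open>0 < L\<close> by (auto simp: field_simps)
  then show ?thesis
    by auto
qed

lemma arccos_cos_rescaled:
  assumes "0 < L" "y \<in> {-L..L}"
  shows "2 * L / pi * arccos (cos (pi / (2 * L) * y + pi / 2)) - L = y"
proof -
  have "pi / (2 * L) * y + pi / 2 = pi / (2 * L) * (y + L)"
    using \<open>0 < L\<close> by (simp add: field_simps)
  moreover have "0 \<le> pi / (2 * L) * (y + L)"
    using assms by simp
  moreover have "pi / (2 * L) * (y + L) \<le> pi / (2 * L) * (2 * L)"
    using assms by (intro mult_left_mono) auto
  ultimately have "arccos (cos (pi / (2 * L) * y + pi / 2)) = pi / (2 * L) * (y + L)"
    using \<open>0 < L\<close> by (simp add: arccos_cos)
  then show ?thesis
    using \<open>0 < L\<close> by simp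
qed

lemma uniform_approx_by_trig_poly_coordinate:
  fixes h :: "real \<Rightarrow> real"
  assumes J: "finite J" and h_cont: "continuous_on {-L..L} h" and h_bound: "\<forall>y\<in>{-L..L}. \<bar>h y\<bar> \<le> 1"
    and "0 < L" "0 < e"
  obtains T where "\<And>j. j \<in> J \<Longrightarrow> (\<lambda>x. complex_of_real (T (x j))) \<in> trig_polys J"
    and "\<forall>y\<in>{-L..L}. \<bar>T y - h y\<bar> < e" and "\<forall>y. \<bar>T y\<bar> \<le> 1 + e"
proof -
  text \<open>\<open>\<gamma>\<close> maps \<open>[-1, 1]\<close> onto \<open>[-L, L]\<close> and inverts \<open>y \<mapsto> cos (pi / (2 * L) * y + pi / 2)\<close>
    there, so a polynomial \<open>P\<close> approximating \<open>h \<circ> \<gamma>\<close> gives \<open>T = P \<circ> cos (pi / (2 * L) * _ + pi / 2)\<close>.\<close>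
  define \<gamma> where "\<gamma> c = 2 * L / pi * arccos c - L" for c
  have "continuous_on {-1..1} \<gamma>"
    unfolding \<gamma>_def by (intro continuous_intros) auto
  then have "continuous_on {-1..1} (\<lambda>c. h (\<gamma> c))"
    using arccos_rescaled_range[OF \<open>0 < L\<close>] by (intro continuous_on_compose2[OF h_cont]) (auto simp: \<gamma>_def)
  then obtain P where P: "real_polynomial_function P" "\<And>c. c \<in> {-1..1} \<Longrightarrow> \<bar>h (\<gamma> c) - P c\<bar> < e"
    using Stone_Weierstrass_real_polynomial_function[OF compact_Icc _ \<open>0 < e\<close>] by blast
  show ?thesis
  proof
    show "(\<lambda>x. complex_of_real (P (cos (pi / (2 * L) * x j + pi / 2)))) \<in> trig_polys J" if "j \<in> J" for j
      using trig_polys_polynomial_cos_coordinate[OF P(1) J that] .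
    show "\<forall>y\<in>{-L..L}. \<bar>P (cos (pi / (2 * L) * y + pi / 2)) - h y\<bar> < e"
      using P(2) arccos_cos_rescaled[OF \<open>0 < L\<close>] unfolding \<gamma>_def
      by (metis abs_minus_commute atLeastAtMost_iff cos_ge_minus_one cos_le_one)
    show "\<forall>y. \<bar>P (cos (pi / (2 * L) * y + pi / 2))\<bar> \<le> 1 + e"
    proof
      fix y
      have "cos (pi / (2 * L) * y + pi / 2) \<in> {-1..1}"
        by simp
      then show "\<bar>P (cos (pi / (2 * L) * y + pi / 2))\<bar> \<le> 1 + e"
        using P(2) h_bound arccos_rescaled_range[OF \<open>0 < L\<close>] unfolding \<gamma>_def by (smt (verit))
    qed
  qed
qed

lemma abs_prod_le_power:
  fixes u :: "'i \<Rightarrow> real"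
  assumes "\<And>i. i \<in> I \<Longrightarrow> \<bar>u i\<bar> \<le> B"
  shows "\<bar>\<Prod>i\<in>I. u i\<bar> \<le> B ^ card I"
proof -
  have "(\<Prod>i\<in>I. \<bar>u i\<bar>) \<le> (\<Prod>i\<in>I. B)"
    using assms by (intro prod_mono) auto
  then show ?thesis
    by (simp add: abs_prod)
qed

lemma abs_prod_diff_le:
  fixes u v :: "'i \<Rightarrow> real"
  assumes "0 < B" and "\<And>i. i \<in> I \<Longrightarrow> \<bar>u i\<bar> \<le> B" and "\<And>i. i \<in> I \<Longrightarrow> \<bar>v i\<bar> \<le> B"
  shows "\<bar>(\<Prod>i\<in>I. u i) - (\<Prod>i\<in>I. v i)\<bar> \<le> B ^ card I / B * (\<Sum>i\<in>I. \<bar>u i - v i\<bar>)"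
proof -
  text \<open>Scaling by \<open>1 / B\<close> moves all factors into the unit disc, where the product is 1-Lipschitz.\<close>
  have "norm ((\<Prod>i\<in>I. u i / B) - (\<Prod>i\<in>I. v i / B)) \<le> (\<Sum>i\<in>I. norm (u i / B - v i / B))"
    by (rule norm_prod_diff) (use assms in \<open>auto simp: abs_divide\<close>)
  also have "(\<Prod>i\<in>I. u i / B) - (\<Prod>i\<in>I. v i / B) = ((\<Prod>i\<in>I. u i) - (\<Prod>i\<in>I. v i)) / B ^ card I"
    by (simp add: prod_dividef diff_divide_distrib)
  also have "(\<Sum>i\<in>I. norm (u i / B - v i / B)) = (\<Sum>i\<in>I. \<bar>u i - v i\<bar>) / B"
    using \<open>0 < B\<close> by (simp add: sum_divide_distrib diff_divide_distrib[symmetric] abs_divide)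
  finally show ?thesis
    using \<open>0 < B\<close> by (simp add: divide_le_eq field_simps)
qed

lemma abs_prod_diff_le_outside_cube:
  fixes T r :: "real \<Rightarrow> real" and L e :: real
  assumes T2: "\<And>y. \<bar>T y\<bar> \<le> 2" and r_range: "\<forall>y. 0 \<le> r y \<and> r y \<le> 1"
    and close: "\<forall>y\<in>{-L..L}. \<bar>T y - r y\<bar> < e" and "0 < e"
  shows "\<bar>(\<Prod>j\<in>J. r (x j)) - (\<Prod>j\<in>J. T (x j))\<bar>
       \<le> 2 ^ card J * card J * e + 2 ^ card J * 2 * (if \<exists>j\<in>J. L \<le> \<bar>x j\<bar> then 1 else 0)"
proof -
  let ?d = "card J"
  have r1: "\<bar>r y\<bar> \<le> 1" for y
    using r_range[rule_format, of y] by simp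
  have r2: "\<bar>r y\<bar> \<le> 2" for y
    using r1[of y] by linarith
  show ?thesis
  proof (cases "\<exists>j\<in>J. L \<le> \<bar>x j\<bar>")
    case True
    have "\<bar>\<Prod>j\<in>J. T (x j)\<bar> \<le> 2 ^ ?d"
      by (rule abs_prod_le_power) (rule T2)
    moreover have "\<bar>\<Prod>j\<in>J. r (x j)\<bar> \<le> 1"
      using abs_prod_le_power[of J "\<lambda>j. r (x j)" 1] r1 by simp
    moreover have "(1::real) \<le> 2 ^ ?d" "0 \<le> 2 ^ ?d * ?d * e"
      using \<open>0 < e\<close> by auto
    ultimately have "\<bar>(\<Prod>j\<in>J. r (x j)) - (\<Prod>j\<in>J. T (x j))\<bar> \<le> 2 ^ ?d * ?d * e + 2 ^ ?d * 2"
      using abs_triangle_ineq4[of "\<Prod>j\<in>J. r (x j)" "\<Prod>j\<in>J. T (x j)"] by linarith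
    then show ?thesis
      using True by simp
  next
    case False
    have "\<bar>r (x j) - T (x j)\<bar> \<le> e" if "j \<in> J" for j
    proof -
      have "x j \<in> {-L..L}"
        using False that by (auto simp: not_le abs_less_iff)
      then show ?thesis
        using close by (auto simp: abs_minus_commute less_imp_le)
    qed
    then have "(\<Sum>j\<in>J. \<bar>r (x j) - T (x j)\<bar>) \<le> ?d * e"
      using sum_mono[of J "\<lambda>j. \<bar>r (x j) - T (x j)\<bar>" "\<lambda>_. e"] by simp
    have "\<bar>(\<Prod>j\<in>J. r (x j)) - (\<Prod>j\<in>J. T (x j))\<bar> \<le> 2 ^ ?d / 2 * (\<Sum>j\<in>J. \<bar>r (x j) - T (x j)\<bar>)"
      using T2 r2 by (intro abs_prod_diff_le) auto
    also have "\<dots> \<le> 2 ^ ?d / 2 * (?d * e)"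
      using \<open>(\<Sum>j\<in>J. \<bar>r (x j) - T (x j)\<bar>) \<le> ?d * e\<close> by (intro mult_left_mono) auto
    also have "\<dots> \<le> 2 ^ ?d * ?d * e"
      using \<open>0 < e\<close> by simp
    finally show ?thesis
      using False by simp
  qed
qed

lemma trig_poly_product_approx:
  fixes r :: "real \<Rightarrow> real" and L e :: real
  assumes J: "finite J" and "0 < L" "0 < e" "e \<le> 1"
    and r_cont: "continuous_on {-L..L} r" and r_range: "\<forall>y. 0 \<le> r y \<and> r y \<le> 1"
  obtains F where "(\<lambda>x. complex_of_real (F x)) \<in> trig_polys J"
    and "\<And>x. \<bar>(\<Prod>j\<in>J. r (x j)) - F x\<bar>
           \<le> 2 ^ card J * card J * e + 2 ^ card J * 2 * (if \<exists>j\<in>J. L \<le> \<bar>x j\<bar> then 1 else 0)"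
proof -
  have "\<forall>y\<in>{-L..L}. \<bar>r y\<bar> \<le> 1"
    using r_range by auto
  then obtain T where T: "\<And>j. j \<in> J \<Longrightarrow> (\<lambda>x. complex_of_real (T (x j))) \<in> trig_polys J"
    "\<forall>y\<in>{-L..L}. \<bar>T y - r y\<bar> < e" "\<forall>y. \<bar>T y\<bar> \<le> 1 + e"
    using uniform_approx_by_trig_poly_coordinate[OF J r_cont _ \<open>0 < L\<close> \<open>0 < e\<close>] by metis
  have "\<bar>T y\<bar> \<le> 2" for y
    using T(3)[rule_format, of y] \<open>e \<le> 1\<close> by linarith
  then have "\<bar>(\<Prod>j\<in>J. r (x j)) - (\<Prod>j\<in>J. T (x j))\<bar>
      \<le> 2 ^ card J * card J * e + 2 ^ card J * 2 * (if \<exists>j\<in>J. L \<le> \<bar>x j\<bar> then 1 else 0)" for x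
    by (rule abs_prod_diff_le_outside_cube[OF _ r_range T(2) \<open>0 < e\<close>])
  moreover have "(\<lambda>x. complex_of_real (\<Prod>j\<in>J. T (x j))) \<in> trig_polys J"
    using trig_polys_prod[OF J T(1)] by simp
  ultimately show ?thesis
    using that[of "\<lambda>x. \<Prod>j\<in>J. T (x j)"] by blast
qed

definition ramp :: "real \<Rightarrow> real \<Rightarrow> real \<Rightarrow> real" where
  "ramp a b y = max 0 (min 1 ((y - a) / (b - a)))"

lemma ramp_range: "0 \<le> ramp a b y \<and> ramp a b y \<le> 1"
  by (simp add: ramp_def)

lemma continuous_on_ramp: "continuous_on S (ramp a b)"
  unfolding ramp_def divide_inverse by (intro continuous_intros)

lemma prod_ramp_le:
  assumes "finite J" "a < b"
  shows "(\<Prod>j\<in>J. ramp a b (x j)) \<le> (if \<forall>j\<in>J. a < x j then 1 else 0)"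
proof (cases "\<forall>j\<in>J. a < x j")
  case True
  then show ?thesis
    using ramp_range by (simp add: prod_le_1)
next
  case False
  then obtain j where "j \<in> J" "x j \<le> a"
    by auto
  then have "ramp a b (x j) = 0"
    using \<open>a < b\<close> by (simp add: ramp_def divide_nonpos_pos)
  then have "(\<Prod>j\<in>J. ramp a b (x j)) = 0"
    using \<open>finite J\<close> \<open>j \<in> J\<close> by (metis prod_zero_iff)
  then show ?thesis
    using False by simp
qed

lemma prod_ramp_ge:
  assumes "a < b"
  shows "(if \<forall>j\<in>J. b \<le> x j then 1 else 0) \<le> (\<Prod>j\<in>J. ramp a b (x j))"
proof (cases "\<forall>j\<in>J. b \<le> x j")
  case True
  then have "ramp a b (x j) = 1" if "j \<in> J" for j
    using that \<open>a < b\<close> by (simp add: ramp_def)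
  then show ?thesis
    using True by simp
next
  case False
  then show ?thesis
    using ramp_range by (subst if_not_P) (auto intro: prod_nonneg)
qed

lemma integrable_prod_ramp_mat_apply:
  "integrable (std_gauss J) (\<lambda>w. \<Prod>j\<in>J. ramp a b (mat_apply A J w j))"
proof -
  note [measurable] = borel_measurable_continuous_onI[OF continuous_on_ramp]
  show ?thesis
    using ramp_range
    by (intro std_gauss.integrable_const_bound[where B = 1]) (auto simp: abs_prod intro!: prod_le_1)
qed

lemma std_gauss_orthant_le_integral_prod_ramp:
  assumes "finite J" "a < b"
  shows "measure (std_gauss J) {w \<in> space (std_gauss J). \<forall>j\<in>J. b \<le> mat_apply A J w j}
       \<le> (\<integral>w. (\<Prod>j\<in>J. ramp a b (mat_apply A J w j)) \<partial>std_gauss J)"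
proof (rule std_gauss.measure_le_integral[OF integrable_prod_ramp_mat_apply])
  show "{w \<in> space (std_gauss J). \<forall>j\<in>J. b \<le> mat_apply A J w j} \<in> sets (std_gauss J)"
    using \<open>finite J\<close> by measurable
  show "indicator {w \<in> space (std_gauss J). \<forall>j\<in>J. b \<le> mat_apply A J w j} w
      \<le> (\<Prod>j\<in>J. ramp a b (mat_apply A J w j))" if "w \<in> space (std_gauss J)" for w
    using prod_ramp_ge[OF \<open>a < b\<close>, of J "mat_apply A J w"] that by (auto simp: indicator_def split: if_split_asm)
qed

lemma integral_prod_ramp_le_std_gauss_orthant:
  assumes "finite J" "a < b"
  shows "(\<integral>w. (\<Prod>j\<in>J. ramp a b (mat_apply A J w j)) \<partial>std_gauss J)
       \<le> measure (std_gauss J) {w \<in> space (std_gauss J). \<forall>j\<in>J. a \<le> mat_apply A J w j}"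
proof (rule std_gauss.integral_le_measure[OF integrable_prod_ramp_mat_apply])
  show "{w \<in> space (std_gauss J). \<forall>j\<in>J. a \<le> mat_apply A J w j} \<in> sets (std_gauss J)"
    using \<open>finite J\<close> by measurable
  show "(\<Prod>j\<in>J. ramp a b (mat_apply A J w j))
      \<le> indicator {w \<in> space (std_gauss J). \<forall>j\<in>J. a \<le> mat_apply A J w j} w" if "w \<in> space (std_gauss J)" for w
    using prod_ramp_le[OF assms, of "mat_apply A J w"] that
    by (auto simp: indicator_def less_imp_le split: if_splits)
qed

section \<open>A central limit theorem for orthants\<close>

lemma tendsto_sandwich_approx:
  fixes f :: "nat \<Rightarrow> real"
  assumes approx: "\<And>\<eta>. 0 < \<eta> \<Longrightarrow> \<exists>lo up lo_lim up_lim. lo \<longlonglongrightarrow> lo_lim \<and> up \<longlonglongrightarrow> up_lim \<and>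
      (\<forall>n. lo n \<le> f n \<and> f n \<le> up n) \<and> l - \<eta> \<le> lo_lim \<and> up_lim \<le> l + \<eta>"
  shows "f \<longlonglongrightarrow> l"
proof (rule order_tendstoI)
  fix c assume "c < l"
  then obtain lo lo_lim where "lo \<longlonglongrightarrow> lo_lim" "\<forall>n. lo n \<le> f n" "l - (l - c) / 2 \<le> lo_lim"
    using approx[of "(l - c) / 2"] by auto
  moreover have "c < l - (l - c) / 2"
    using \<open>c < l\<close> by (simp add: field_simps)
  ultimately have "eventually (\<lambda>n. c < lo n) sequentially"
    by (intro order_tendstoD(1)[of lo lo_lim]) auto
  then show "eventually (\<lambda>n. c < f n) sequentially"
    by eventually_elim (use \<open>\<forall>n. lo n \<le> f n\<close> in \<open>auto intro: less_le_trans\<close>)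
next
  fix c assume "l < c"
  then obtain up up_lim where "up \<longlonglongrightarrow> up_lim" "\<forall>n. f n \<le> up n" "up_lim \<le> l + (c - l) / 2"
    using approx[of "(c - l) / 2"] by auto
  moreover have "l + (c - l) / 2 < c"
    using \<open>l < c\<close> by (simp add: field_simps)
  ultimately have "eventually (\<lambda>n. up n < c) sequentially"
    by (intro order_tendstoD(2)[of up up_lim]) auto
  then show "eventually (\<lambda>n. f n < c) sequentially"
    by eventually_elim (use \<open>\<forall>n. f n \<le> up n\<close> in \<open>auto intro: le_less_trans\<close>)
qed

locale standardized_walk = centred_walk +
  assumes unit_variance: "\<forall>j\<in>J. (\<Sum>s\<in>S. p s * (a s j)\<^sup>2) = 1"
begin

lemma unit_rows: "\<forall>j\<in>J. (\<Sum>k\<in>J. (A j k)\<^sup>2) = 1"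
  using covariance unit_variance by (simp add: power2_eq_square mult.assoc)

lemma iid_expectation_close:
  fixes f g :: "(nat \<Rightarrow> real) \<Rightarrow> real" and L :: real
  assumes close: "\<And>x. \<bar>f x - g x\<bar> \<le> c + C * (if \<exists>j\<in>J. L \<le> \<bar>x j\<bar> then 1 else 0)"
    and "0 \<le> C" "0 < L"
  shows "\<bar>iid_expectation S p n (\<lambda>v. f (normalized_sum a n v)) - iid_expectation S p n (\<lambda>v. g (normalized_sum a n v))\<bar>
       \<le> c + C * (card J / L\<^sup>2)"
proof -
  let ?E = "iid_expectation S p n" and ?Y = "normalized_sum a n"
  let ?exit = "\<lambda>v. if \<exists>j\<in>J. L \<le> \<bar>?Y v j\<bar> then 1 else 0 :: real"
  have "\<bar>?E (\<lambda>v. f (?Y v)) - ?E (\<lambda>v. g (?Y v))\<bar> \<le> ?E (\<lambda>v. \<bar>f (?Y v) - g (?Y v)\<bar>)"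
    using norm_iid_expectation_le[OF p_nonneg, of n "\<lambda>v. f (?Y v) - g (?Y v)"]
    by (simp add: iid_expectation_diff)
  also have "\<dots> \<le> ?E (\<lambda>v. c + C * ?exit v)"
    by (intro iid_expectation_mono[OF p_nonneg] close)
  also have "\<dots> = c + C * ?E ?exit"
    by (simp add: iid_expectation_add iid_expectation_mult_left iid_expectation_const[OF finite_S p_sum])
  also have "?E ?exit \<le> card J / L\<^sup>2"
    using iid_expectation_normalized_sum_tail_le[OF finite_S p_nonneg p_sum centred finite_J \<open>0 < L\<close>]
      unit_variance by simp
  finally show ?thesis
    using \<open>0 \<le> C\<close> by (simp add: mult_left_mono)
qed

lemma std_gauss_integral_close:
  fixes f g :: "(nat \<Rightarrow> real) \<Rightarrow> real" and L :: real
  assumes close: "\<And>x. \<bar>f x - g x\<bar> \<le> c + C * (if \<exists>j\<in>J. L \<le> \<bar>x j\<bar> then 1 else 0)"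
    and "0 \<le> C" "0 < L"
    and f: "integrable (std_gauss J) (\<lambda>w. f (mat_apply A J w))"
    and g: "integrable (std_gauss J) (\<lambda>w. g (mat_apply A J w))"
  shows "\<bar>(\<integral>w. f (mat_apply A J w) \<partial>std_gauss J) - (\<integral>w. g (mat_apply A J w) \<partial>std_gauss J)\<bar>
       \<le> c + C * (card J / L\<^sup>2)"
proof -
  let ?G = "std_gauss J" and ?Z = "mat_apply A J"
  define U where "U = {w \<in> space ?G. \<exists>j\<in>J. L \<le> \<bar>?Z w j\<bar>}"
  have U: "U \<in> sets ?G"
    unfolding U_def using finite_J by measurable
  have "\<bar>(\<integral>w. f (?Z w) \<partial>?G) - (\<integral>w. g (?Z w) \<partial>?G)\<bar> = \<bar>\<integral>w. f (?Z w) - g (?Z w) \<partial>?G\<bar>"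
    using f g by simp
  also have "\<dots> \<le> (\<integral>w. \<bar>f (?Z w) - g (?Z w)\<bar> \<partial>?G)"
    by (rule integral_abs_bound)
  also have "\<dots> \<le> (\<integral>w. c + C * indicator U w \<partial>?G)"
  proof (intro integral_mono)
    show "integrable ?G (\<lambda>w. c + C * indicator U w)"
      using U by (intro Bochner_Integration.integrable_add integrable_mult_right std_gauss.integrable_const)
        (auto simp: std_gauss.emeasure_eq_measure)
    show "\<bar>f (?Z w) - g (?Z w)\<bar> \<le> c + C * indicator U w" if "w \<in> space ?G" for w
      using close[of "?Z w"] that by (auto simp: U_def indicator_def split: if_split_asm)
  qed (use f g in auto)
  also have "\<dots> = c + C * measure ?G U"
    using U by (simp add: Int_absorb2 sets.sets_into_space std_gauss.emeasure_eq_measure std_gauss.prob_space)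
  also have "measure ?G U \<le> card J / L\<^sup>2"
    unfolding U_def by (rule std_gauss_tail_le[OF finite_J unit_rows \<open>0 < L\<close>])
  finally show ?thesis
    using \<open>0 \<le> C\<close> by (simp add: mult_left_mono)
qed

lemma prod_expectations_approx:
  fixes r :: "real \<Rightarrow> real" and e :: real
  assumes r_cont: "continuous_on UNIV r" and r_range: "\<forall>y. 0 \<le> r y \<and> r y \<le> 1"
    and "0 < e" "e \<le> 1"
  obtains F where "(\<lambda>x. complex_of_real (F x)) \<in> trig_polys J"
    and "\<And>n. \<bar>iid_expectation S p n (\<lambda>v. \<Prod>j\<in>J. r (normalized_sum a n v j))
              - iid_expectation S p n (\<lambda>v. F (normalized_sum a n v))\<bar> \<le> 3 * (2 ^ card J * card J * e)"
    and "\<bar>(\<integral>w. (\<Prod>j\<in>J. r (mat_apply A J w j)) \<partial>std_gauss J) - (\<integral>w. F (mat_apply A J w) \<partial>std_gauss J)\<bar>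
           \<le> 3 * (2 ^ card J * card J * e)"
proof -
  let ?d = "card J"
  text \<open>On the cube of half-width \<open>1 / e\<close> the exit probability is at most \<open>card J * e\<^sup>2\<close>,
    of the same order as the uniform error \<open>e\<close>.\<close>
  have "0 < 1 / e"
    using \<open>0 < e\<close> by simp
  obtain F where F: "(\<lambda>x. complex_of_real (F x)) \<in> trig_polys J"
    and close: "\<And>x. \<bar>(\<Prod>j\<in>J. r (x j)) - F x\<bar>
        \<le> 2 ^ ?d * ?d * e + 2 ^ ?d * 2 * (if \<exists>j\<in>J. 1 / e \<le> \<bar>x j\<bar> then 1 else 0)"
    using trig_poly_product_approx[OF finite_J \<open>0 < 1 / e\<close> \<open>0 < e\<close> \<open>e \<le> 1\<close>
        continuous_on_subset[OF r_cont subset_UNIV] r_range] by blast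
  have "e * e \<le> 1 * e"
    using \<open>0 < e\<close> \<open>e \<le> 1\<close> by (intro mult_right_mono) auto
  then have "2 ^ ?d * 2 * (?d * (e * e)) \<le> 2 ^ ?d * 2 * (?d * e)"
    by (intro mult_left_mono) auto
  then have bound: "2 ^ ?d * ?d * e + 2 ^ ?d * 2 * (?d / (1 / e)\<^sup>2) \<le> 3 * (2 ^ ?d * ?d * e)"
    by (simp add: power2_eq_square mult_ac)
  note [measurable] = borel_measurable_continuous_onI[OF r_cont]
  have "integrable (std_gauss J) (\<lambda>w. \<Prod>j\<in>J. r (mat_apply A J w j))"
    using r_range by (intro std_gauss.integrable_const_bound[where B = 1]) (auto simp: abs_prod intro!: prod_le_1)
  moreover have "integrable (std_gauss J) (\<lambda>w. F (mat_apply A J w))"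
    using integrable_trig_poly_mat_apply[OF F] by (simp add: complex_of_real_integrable_eq)
  ultimately show ?thesis
    using that[OF F order_trans[OF iid_expectation_close[OF close] bound]
        order_trans[OF std_gauss_integral_close[OF close] bound]] \<open>0 < 1 / e\<close> by simp
qed

theorem tendsto_iid_expectation_prod:
  fixes r :: "real \<Rightarrow> real"
  assumes r_cont: "continuous_on UNIV r" and r_range: "\<forall>y. 0 \<le> r y \<and> r y \<le> 1"
  shows "(\<lambda>n. iid_expectation S p n (\<lambda>v. \<Prod>j\<in>J. r (normalized_sum a n v j)))
           \<longlonglongrightarrow> (\<integral>w. (\<Prod>j\<in>J. r (mat_apply A J w j)) \<partial>std_gauss J)"
proof (rule tendsto_sandwich_approx)
  fix \<eta> :: real assume "0 < \<eta>"
  let ?d = "card J"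
  define K where "K = 2 ^ ?d * (real ?d + 1)"
  define e where "e = min 1 (\<eta> / (6 * K))"
  define \<delta> where "\<delta> = 3 * (2 ^ ?d * ?d * e)"
  have "0 < K"
    by (simp add: K_def add_pos_nonneg)
  then have "0 < e" "e \<le> 1"
    using \<open>0 < \<eta>\<close> by (auto simp: e_def)
  have "\<delta> \<le> 3 * K * e"
    using \<open>0 < e\<close> by (simp add: \<delta>_def K_def)
  also have "\<dots> \<le> 3 * K * (\<eta> / (6 * K))"
    using \<open>0 < K\<close> unfolding e_def by (intro mult_left_mono min.cobounded2) auto
  also have "\<dots> = \<eta> / 2"
    using \<open>0 < K\<close> by simp
  finally have "\<delta> \<le> \<eta> / 2" .
  obtain F where F: "(\<lambda>x. complex_of_real (F x)) \<in> trig_polys J"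
    and discrete: "\<And>n. \<bar>iid_expectation S p n (\<lambda>v. \<Prod>j\<in>J. r (normalized_sum a n v j))
              - iid_expectation S p n (\<lambda>v. F (normalized_sum a n v))\<bar> \<le> \<delta>"
    and gaussian: "\<bar>(\<integral>w. (\<Prod>j\<in>J. r (mat_apply A J w j)) \<partial>std_gauss J) - (\<integral>w. F (mat_apply A J w) \<partial>std_gauss J)\<bar>
           \<le> \<delta>"
    using prod_expectations_approx[OF r_cont r_range \<open>0 < e\<close> \<open>e \<le> 1\<close>] unfolding \<delta>_def by blast
  let ?f = "\<lambda>n. iid_expectation S p n (\<lambda>v. \<Prod>j\<in>J. r (normalized_sum a n v j))"
  let ?l = "\<integral>w. (\<Prod>j\<in>J. r (mat_apply A J w j)) \<partial>std_gauss J"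
  let ?EF = "\<lambda>n. iid_expectation S p n (\<lambda>v. F (normalized_sum a n v))"
  let ?IF = "\<integral>w. F (mat_apply A J w) \<partial>std_gauss J"
  have "?EF \<longlonglongrightarrow> ?IF"
    by (rule tendsto_iid_expectation_real_trig_poly[OF F])
  then show "\<exists>lo up lo_lim up_lim. lo \<longlonglongrightarrow> lo_lim \<and> up \<longlonglongrightarrow> up_lim \<and>
      (\<forall>n. lo n \<le> ?f n \<and> ?f n \<le> up n) \<and> ?l - \<eta> \<le> lo_lim \<and> up_lim \<le> ?l + \<eta>"
  proof (intro exI conjI allI)
    show "(\<lambda>n. ?EF n - \<delta>) \<longlonglongrightarrow> ?IF - \<delta>" "(\<lambda>n. ?EF n + \<delta>) \<longlonglongrightarrow> ?IF + \<delta>"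
      using \<open>?EF \<longlonglongrightarrow> ?IF\<close> by (auto intro: tendsto_intros)
    show "?EF n - \<delta> \<le> ?f n" "?f n \<le> ?EF n + \<delta>" for n
      using discrete[of n] by (auto simp: abs_le_iff)
    show "?l - \<eta> \<le> ?IF - \<delta>" "?IF + \<delta> \<le> ?l + \<eta>"
      using gaussian \<open>\<delta> \<le> \<eta> / 2\<close> by (auto simp: abs_le_iff)
  qed
qed

theorem tendsto_orthant:
  "(\<lambda>n. iid_expectation S p n (\<lambda>v. if \<forall>j\<in>J. 0 < normalized_sum a n v j then 1 else 0))
     \<longlonglongrightarrow> measure (std_gauss J) {w \<in> space (std_gauss J). \<forall>j\<in>J. 0 \<le> mat_apply A J w j}"
proof (rule tendsto_sandwich_approx)
  fix \<eta> :: real assume "0 < \<eta>"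
  let ?f = "\<lambda>n. iid_expectation S p n (\<lambda>v. if \<forall>j\<in>J. 0 < normalized_sum a n v j then 1 else 0)"
  let ?\<mu> = "\<lambda>c. measure (std_gauss J) {w \<in> space (std_gauss J). \<forall>j\<in>J. c \<le> mat_apply A J w j}"
  define \<delta> where "\<delta> = \<eta> / (2 * (card J + 1))"
  have "0 < \<delta>"
    using \<open>0 < \<eta>\<close> by (simp add: \<delta>_def)
  have "card J * (2 * \<delta>) \<le> \<eta>"
    using \<open>0 < \<eta>\<close> by (simp add: \<delta>_def field_simps)
  moreover have "card J * \<delta> \<le> card J * (2 * \<delta>)"
    using \<open>0 < \<delta>\<close> by (intro mult_left_mono) auto
  text \<open>The ramps squeeze the orthant indicator between the orthants shifted by \<open>2 * \<delta>\<close>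
    and \<open>- \<delta>\<close>; each shift costs at most \<open>card J\<close> times its length in Gaussian measure.\<close>
  moreover have "?\<mu> 0 \<le> ?\<mu> (2 * \<delta>) + card J * (2 * \<delta>)"
    using std_gauss_orthant_shift_le[OF finite_J unit_rows, of 0 "2 * \<delta>"] \<open>0 < \<delta>\<close> by simp
  moreover have "?\<mu> (- \<delta>) \<le> ?\<mu> 0 + card J * \<delta>"
    using std_gauss_orthant_shift_le[OF finite_J unit_rows, of "- \<delta>" 0] \<open>0 < \<delta>\<close> by simp
  moreover have "?\<mu> (2 * \<delta>) \<le> (\<integral>w. (\<Prod>j\<in>J. ramp \<delta> (2 * \<delta>) (mat_apply A J w j)) \<partial>std_gauss J)"
    using \<open>0 < \<delta>\<close> by (intro std_gauss_orthant_le_integral_prod_ramp finite_J) simp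
  moreover have "(\<integral>w. (\<Prod>j\<in>J. ramp (- \<delta>) 0 (mat_apply A J w j)) \<partial>std_gauss J) \<le> ?\<mu> (- \<delta>)"
    using \<open>0 < \<delta>\<close> by (intro integral_prod_ramp_le_std_gauss_orthant finite_J) simp
  ultimately have lower: "?\<mu> 0 - \<eta> \<le> (\<integral>w. (\<Prod>j\<in>J. ramp \<delta> (2 * \<delta>) (mat_apply A J w j)) \<partial>std_gauss J)"
    and upper: "(\<integral>w. (\<Prod>j\<in>J. ramp (- \<delta>) 0 (mat_apply A J w j)) \<partial>std_gauss J) \<le> ?\<mu> 0 + \<eta>"
    by linarith+
  show "\<exists>lo up lo_lim up_lim. lo \<longlonglongrightarrow> lo_lim \<and> up \<longlonglongrightarrow> up_lim \<and>
      (\<forall>n. lo n \<le> ?f n \<and> ?f n \<le> up n) \<and> ?\<mu> 0 - \<eta> \<le> lo_lim \<and> up_lim \<le> ?\<mu> 0 + \<eta>"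
  proof (intro exI conjI allI)
    have conv: "(\<lambda>n. iid_expectation S p n (\<lambda>v. \<Prod>j\<in>J. ramp c d (normalized_sum a n v j)))
        \<longlonglongrightarrow> (\<integral>w. (\<Prod>j\<in>J. ramp c d (mat_apply A J w j)) \<partial>std_gauss J)" for c d
      by (intro tendsto_iid_expectation_prod continuous_on_ramp allI ramp_range)
    show "(\<lambda>n. iid_expectation S p n (\<lambda>v. \<Prod>j\<in>J. ramp \<delta> (2 * \<delta>) (normalized_sum a n v j)))
        \<longlonglongrightarrow> (\<integral>w. (\<Prod>j\<in>J. ramp \<delta> (2 * \<delta>) (mat_apply A J w j)) \<partial>std_gauss J)"
      and "(\<lambda>n. iid_expectation S p n (\<lambda>v. \<Prod>j\<in>J. ramp (- \<delta>) 0 (normalized_sum a n v j)))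
        \<longlonglongrightarrow> (\<integral>w. (\<Prod>j\<in>J. ramp (- \<delta>) 0 (mat_apply A J w j)) \<partial>std_gauss J)"
      by (rule conv)+
    have "(\<Prod>j\<in>J. ramp \<delta> (2 * \<delta>) (x j)) \<le> (if \<forall>j\<in>J. 0 < x j then 1 else 0)" for x
      using prod_ramp_le[OF finite_J, of \<delta> "2 * \<delta>" x] \<open>0 < \<delta>\<close> by (auto split: if_splits)
    then show "iid_expectation S p n (\<lambda>v. \<Prod>j\<in>J. ramp \<delta> (2 * \<delta>) (normalized_sum a n v j)) \<le> ?f n" for n
      by (intro iid_expectation_mono[OF p_nonneg])
    have "(if \<forall>j\<in>J. 0 < x j then 1 else 0) \<le> (\<Prod>j\<in>J. ramp (- \<delta>) 0 (x j))" for x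
      using prod_ramp_ge[of "- \<delta>" 0 J x] \<open>0 < \<delta>\<close> by (auto split: if_splits)
    then show "?f n \<le> iid_expectation S p n (\<lambda>v. \<Prod>j\<in>J. ramp (- \<delta>) 0 (normalized_sum a n v j))" for n
      by (intro iid_expectation_mono[OF p_nonneg])
  qed (fact lower, fact upper)
qed

end

section \<open>Factoring a Gram matrix\<close>

definition inner_on :: "'b set \<Rightarrow> ('b \<Rightarrow> real) \<Rightarrow> ('b \<Rightarrow> real) \<Rightarrow> real" where
  "inner_on S x y = (\<Sum>s\<in>S. x s * y s)"

lemma inner_on_commute: "inner_on S x y = inner_on S y x"
  unfolding inner_on_def by (simp add: mult.commute)

lemma inner_on_diff_scaled:
  "inner_on S (\<lambda>s. x s - a * z s) (\<lambda>s. y s - b * z s)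
     = inner_on S x y - b * inner_on S x z - a * inner_on S z y + a * b * inner_on S z z"
  unfolding inner_on_def by (simp add: algebra_simps sum.distrib sum_subtractf sum_distrib_left)

lemma inner_on_residual:
  assumes "finite S"
  shows "inner_on S x y = inner_on S x z * inner_on S y z / inner_on S z z
           + inner_on S (\<lambda>s. x s - inner_on S x z / inner_on S z z * z s)
                        (\<lambda>s. y s - inner_on S y z / inner_on S z z * z s)"
    and "inner_on S (\<lambda>s. z s - inner_on S z z / inner_on S z z * z s) y = 0"
proof -
  show "inner_on S (\<lambda>s. z s - inner_on S z z / inner_on S z z * z s) y = 0"
  proof (cases "inner_on S z z = 0")
    case True
    then have "z s = 0" if "s \<in> S" for s
      using that assms unfolding inner_on_def by (subst (asm) sum_nonneg_eq_0_iff) auto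
    then show ?thesis
      using True by (simp add: inner_on_def)
  qed (simp add: inner_on_def)
  show "inner_on S x y = inner_on S x z * inner_on S y z / inner_on S z z
           + inner_on S (\<lambda>s. x s - inner_on S x z / inner_on S z z * z s)
                        (\<lambda>s. y s - inner_on S y z / inner_on S z z * z s)"
  proof (cases "inner_on S z z = 0")
    case False
    then show ?thesis
      unfolding inner_on_diff_scaled using inner_on_commute[of S z y] by (simp add: field_simps)
  qed simp
qed

lemma gram_matrix_factorization:
  fixes u :: "nat \<Rightarrow> 'b \<Rightarrow> real"
  assumes "finite J" and "finite S"
  shows "\<exists>A. \<forall>j\<in>J. \<forall>l\<in>J. (\<Sum>k\<in>J. A j k * A l k) = inner_on S (u j) (u l)"
  using assms(1)
proof (induction J arbitrary: u rule: finite_induct)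
  case empty
  show ?case by simp
next
  case (insert j0 J u)
  let ?ip = "inner_on S"
  text \<open>One Gram--Schmidt step: the components along \<open>u j0\<close> form column \<open>j0\<close> of the factor,
    and the Gram matrix of the residuals \<open>u'\<close> is factored by induction.\<close>
  define c where "c j = ?ip (u j) (u j0) / sqrt (?ip (u j0) (u j0))" for j
  define u' where "u' j = (\<lambda>s. u j s - ?ip (u j) (u j0) / ?ip (u j0) (u j0) * u j0 s)" for j
  obtain A' where A': "\<forall>j\<in>J. \<forall>l\<in>J. (\<Sum>k\<in>J. A' j k * A' l k) = ?ip (u' j) (u' l)"
    using insert.IH by blast
  have "0 \<le> ?ip (u j0) (u j0)"
    unfolding inner_on_def by (intro sum_nonneg) simp
  then have "c j * c l = ?ip (u j) (u j0) * ?ip (u l) (u j0) / ?ip (u j0) (u j0)" for j l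
    by (simp add: c_def real_sqrt_mult[symmetric])
  then have ip_split: "?ip (u j) (u l) = c j * c l + ?ip (u' j) (u' l)" for j l
    using inner_on_residual(1)[OF \<open>finite S\<close>, of "u j" "u l" "u j0"] by (simp add: u'_def)
  have u'_j0: "?ip (u' j0) y = 0" "?ip y (u' j0) = 0" for y
    using inner_on_residual(2)[OF \<open>finite S\<close>, of "u j0" y] inner_on_commute[of S y]
    by (simp_all add: u'_def)
  define A where "A j k = (if k = j0 then c j else if j = j0 then 0 else A' j k)" for j k
  have "(\<Sum>k\<in>insert j0 J. A j k * A l k) = ?ip (u j) (u l)" if "j \<in> insert j0 J" "l \<in> insert j0 J" for j l
  proof -
    have "(\<Sum>k\<in>J. A j k * A l k) = ?ip (u' j) (u' l)"
    proof (cases "j = j0 \<or> l = j0")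
      case True
      then show ?thesis
        using u'_j0 insert.hyps(2) by (auto simp: A_def intro!: sum.neutral)
    next
      case False
      then have "j \<in> J" "l \<in> J"
        using that by auto
      have "(\<Sum>k\<in>J. A j k * A l k) = (\<Sum>k\<in>J. A' j k * A' l k)"
        using False insert.hyps(2) by (intro sum.cong) (auto simp: A_def)
      then show ?thesis
        using A' \<open>j \<in> J\<close> \<open>l \<in> J\<close> by simp
    qed
    then show ?thesis
      using insert.hyps ip_split by (simp add: A_def)
  qed
  then show ?case
    by blast
qed

section \<open>Rankings and Condorcet winners\<close>

lemma finite_rankings: "finite (rankings m)"
  unfolding rankings_def by (rule finite_permutations) simp

definition flip_position :: "nat \<Rightarrow> nat \<Rightarrow> nat" where
  "flip_position m k = (if k < m then m - 1 - k else k)"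

lemma flip_position_permutes: "flip_position m permutes {..<m}"
proof (rule bij_imp_permutes)
  show "bij_betw (flip_position m) {..<m} {..<m}"
    by (rule bij_betw_byWitness[where f' = "flip_position m"]) (auto simp: flip_position_def)
qed (simp add: flip_position_def)

lemma rev_rank_eq_flip_position_comp:
  assumes "\<sigma> permutes {..<m}"
  shows "rev_rank m \<sigma> = flip_position m \<circ> \<sigma>"
proof
  fix i
  show "rev_rank m \<sigma> i = (flip_position m \<circ> \<sigma>) i"
  proof (cases "i < m")
    case True
    then have "\<sigma> i < m"
      using permutes_in_image[OF assms] by auto
    then show ?thesis
      using True by (simp add: rev_rank_def flip_position_def)
  next
    case False
    then show ?thesis
      using permutes_not_in[OF assms] by (simp add: rev_rank_def flip_position_def)
  qed
qed

lemma rev_rank_in_rankings: "\<sigma> \<in> rankings m \<Longrightarrow> rev_rank m \<sigma> \<in> rankings m"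
  unfolding rankings_def
  by (simp add: rev_rank_eq_flip_position_comp permutes_compose flip_position_permutes)

lemma rev_rank_rev_rank: "\<sigma> \<in> rankings m \<Longrightarrow> rev_rank m (rev_rank m \<sigma>) = \<sigma>"
  unfolding rankings_def
  by (simp add: rev_rank_eq_flip_position_comp permutes_compose flip_position_permutes fun_eq_iff
      flip_position_def permutes_in_image permutes_not_in)

lemma bij_betw_rev_rank: "bij_betw (rev_rank m) (rankings m) (rankings m)"
  by (rule bij_betw_byWitness[where f' = "rev_rank m"]) (auto simp: rev_rank_rev_rank rev_rank_in_rankings)

lemma ranking_position_neq:
  assumes "\<sigma> \<in> rankings m" "i < m" "j < m" "i \<noteq> j"
  shows "\<sigma> i \<noteq> \<sigma> j"
  using assms permutes_inj[of \<sigma> "{..<m}"] by (auto simp: rankings_def dest: injD)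

lemma pref_rev_rank:
  assumes "\<sigma> \<in> rankings m" "i < m" "j < m" "i \<noteq> j"
  shows "pref (rev_rank m \<sigma>) i j = - pref \<sigma> i j"
proof -
  have "\<sigma> i < m" "\<sigma> j < m"
    using assms permutes_in_image[of \<sigma> "{..<m}"] by (auto simp: rankings_def)
  then show ?thesis
    using ranking_position_neq[OF assms] assms(2,3) by (auto simp: pref_def rev_rank_def)
qed

lemma pref_swap:
  assumes "\<sigma> \<in> rankings m" "i < m" "j < m" "i \<noteq> j"
  shows "pref \<sigma> j i = - pref \<sigma> i j"
  using ranking_position_neq[OF assms] by (auto simp: pref_def)

lemma pref3_eq_pref_mult:
  assumes "\<sigma> \<in> rankings m" "i < m" "j < m" "l < m" "i \<noteq> j" "i \<noteq> l"
  shows "pref3 \<sigma> i j l = pref \<sigma> i j * pref \<sigma> i l"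
  using ranking_position_neq[of \<sigma> m i j] ranking_position_neq[of \<sigma> m i l] assms by (auto simp: pref3_def pref_def)

lemma pref_squared: "(pref \<sigma> i j)\<^sup>2 = 1"
  by (simp add: pref_def)

lemma lam_eq_0_if_dual:
  assumes dual: "\<forall>\<sigma>\<in>rankings m. p (rev_rank m \<sigma>) = p \<sigma>" and "i < m" "j < m" "i \<noteq> j"
  shows "lam p m i j = 0"
proof -
  have "lam p m i j = (\<Sum>\<sigma>\<in>rankings m. pref (rev_rank m \<sigma>) i j * p (rev_rank m \<sigma>))"
    unfolding lam_def by (rule sum.reindex_bij_betw[OF bij_betw_rev_rank, symmetric])
  also have "\<dots> = - lam p m i j"
    using dual pref_rev_rank[OF _ assms(2-4)] by (simp add: lam_def sum_negf[symmetric])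
  finally show ?thesis
    by simp
qed

lemma Rmat_eq_if_dual:
  assumes dual: "\<forall>\<sigma>\<in>rankings m. p (rev_rank m \<sigma>) = p \<sigma>" and p_sum: "(\<Sum>\<sigma>\<in>rankings m. p \<sigma>) = 1"
    and "i < m" "j \<in> {..<m} - {i}" "l \<in> {..<m} - {i}"
  shows "Rmat p m i j l = (\<Sum>\<sigma>\<in>rankings m. p \<sigma> * pref \<sigma> i j * pref \<sigma> i l)"
proof (cases "j = l")
  case True
  then show ?thesis
    using p_sum pref_squared[of _ i j] by (simp add: Rmat_def mult.assoc power2_eq_square)
next
  case False
  then have "Rmat p m i j l = (\<Sum>\<sigma>\<in>rankings m. pref3 \<sigma> i j l * p \<sigma>)"
    using lam_eq_0_if_dual[OF dual] assms(3-5) by (simp add: Rmat_def)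
  also have "\<dots> = (\<Sum>\<sigma>\<in>rankings m. p \<sigma> * pref \<sigma> i j * pref \<sigma> i l)"
    using pref3_eq_pref_mult assms(3-5) by (intro sum.cong) auto
  finally show ?thesis .
qed

lemma Rmat_eq_inner_on_if_dual:
  assumes p_nonneg: "\<forall>\<sigma>\<in>rankings m. 0 \<le> p \<sigma>" and p_sum: "(\<Sum>\<sigma>\<in>rankings m. p \<sigma>) = 1"
    and dual: "\<forall>\<sigma>\<in>rankings m. p (rev_rank m \<sigma>) = p \<sigma>"
    and "i < m" "j \<in> {..<m} - {i}" "l \<in> {..<m} - {i}"
  shows "Rmat p m i j l
       = inner_on (rankings m) (\<lambda>\<sigma>. sqrt (p \<sigma>) * pref \<sigma> i j) (\<lambda>\<sigma>. sqrt (p \<sigma>) * pref \<sigma> i l)"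
proof -
  have "(sqrt (p \<sigma>) * pref \<sigma> i j) * (sqrt (p \<sigma>) * pref \<sigma> i l) = p \<sigma> * pref \<sigma> i j * pref \<sigma> i l"
    if "\<sigma> \<in> rankings m" for \<sigma>
  proof -
    have "(sqrt (p \<sigma>) * pref \<sigma> i j) * (sqrt (p \<sigma>) * pref \<sigma> i l)
        = (sqrt (p \<sigma>) * sqrt (p \<sigma>)) * pref \<sigma> i j * pref \<sigma> i l"
      by (simp only: mult_ac)
    then show ?thesis
      using p_nonneg that by simp
  qed
  then have "inner_on (rankings m) (\<lambda>\<sigma>. sqrt (p \<sigma>) * pref \<sigma> i j) (\<lambda>\<sigma>. sqrt (p \<sigma>) * pref \<sigma> i l)
      = (\<Sum>\<sigma>\<in>rankings m. p \<sigma> * pref \<sigma> i j * pref \<sigma> i l)"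
    unfolding inner_on_def by (rule sum.cong[OF refl])
  then show ?thesis
    using Rmat_eq_if_dual[OF dual p_sum assms(4-6)] by simp
qed

lemma sum_mult_Ncount:
  assumes "v \<in> Pi\<^sub>E {..<n} (\<lambda>_. rankings m)"
  shows "(\<Sum>\<sigma>\<in>rankings m. f \<sigma> * real (Ncount n v \<sigma>)) = (\<Sum>k<n. f (v k))"
proof -
  have "(\<Sum>k<n. f (v k)) = (\<Sum>\<sigma>\<in>rankings m. \<Sum>k\<in>{k \<in> {..<n}. v k = \<sigma>}. f (v k))"
    using assms finite_rankings by (intro sum.group[symmetric]) (auto simp: PiE_iff)
  then show ?thesis
    by (simp add: Ncount_def mult.commute)
qed

lemma condorcet_winner_iff:
  assumes "v \<in> Pi\<^sub>E {..<n} (\<lambda>_. rankings m)"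
  shows "condorcet_winner n m v i \<longleftrightarrow> (\<forall>j\<in>{..<m} - {i}. 0 < normalized_sum (\<lambda>\<sigma> j. pref \<sigma> i j) n v j)"
proof -
  have "1 \<le> (\<Sum>\<sigma>\<in>rankings m. pref \<sigma> i j * real (Ncount n v \<sigma>))
      \<longleftrightarrow> 0 < normalized_sum (\<lambda>\<sigma> j. pref \<sigma> i j) n v j" for j
  proof -
    text \<open>The margin is an integer, so being at least 1 is the same as being positive.\<close>
    define z where "z = (\<Sum>k<n. if v k i < v k j then 1 else -1 :: int)"
    have pref_int: "pref \<sigma> i j = of_int (if \<sigma> i < \<sigma> j then 1 else -1)" for \<sigma>
      by (simp add: pref_def)
    have "(\<Sum>\<sigma>\<in>rankings m. pref \<sigma> i j * real (Ncount n v \<sigma>)) = z"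
      unfolding sum_mult_Ncount[OF assms] z_def pref_int by simp
    moreover have "normalized_sum (\<lambda>\<sigma> j. pref \<sigma> i j) n v j = z / sqrt n"
      unfolding normalized_sum_def z_def pref_int by simp
    moreover have "1 \<le> z \<longleftrightarrow> 0 < z"
      by linarith
    moreover have "n = 0 \<Longrightarrow> z = 0"
      by (simp add: z_def)
    ultimately show ?thesis
      by (cases "n = 0") (auto simp: zero_less_divide_iff)
  qed
  then show ?thesis
    unfolding condorcet_winner_def by auto
qed

lemma condorcet_winner_unique:
  assumes "v \<in> Pi\<^sub>E {..<n} (\<lambda>_. rankings m)" and "i < m" "i' < m"
    and "condorcet_winner n m v i" "condorcet_winner n m v i'"
  shows "i = i'"
proof (rule ccontr)
  assume "i \<noteq> i'"
  then have "1 \<le> (\<Sum>\<sigma>\<in>rankings m. pref \<sigma> i i' * real (Ncount n v \<sigma>))"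
    "1 \<le> (\<Sum>\<sigma>\<in>rankings m. pref \<sigma> i' i * real (Ncount n v \<sigma>))"
    using assms unfolding condorcet_winner_def by auto
  moreover have "(\<Sum>\<sigma>\<in>rankings m. pref \<sigma> i' i * real (Ncount n v \<sigma>))
      = - (\<Sum>\<sigma>\<in>rankings m. pref \<sigma> i i' * real (Ncount n v \<sigma>))"
    using pref_swap[OF _ \<open>i < m\<close> \<open>i' < m\<close> \<open>i \<noteq> i'\<close>] by (simp add: sum_negf[symmetric])
  ultimately show False
    by simp
qed

lemma Pcw_eq_sum_iid_expectation:
  "Pcw p n m = (\<Sum>i<m. iid_expectation (rankings m) p n
     (\<lambda>v. if \<forall>j\<in>{..<m} - {i}. 0 < normalized_sum (\<lambda>\<sigma> j. pref \<sigma> i j) n v j then 1 else 0))"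
proof -
  have "(if \<exists>i<m. condorcet_winner n m v i then 1 else 0 :: real)
      = (\<Sum>i<m. if \<forall>j\<in>{..<m} - {i}. 0 < normalized_sum (\<lambda>\<sigma> j. pref \<sigma> i j) n v j then 1 else 0)"
    if v: "v \<in> Pi\<^sub>E {..<n} (\<lambda>_. rankings m)" for v
  proof (cases "\<exists>i<m. condorcet_winner n m v i")
    case True
    then obtain i where "i < m" "condorcet_winner n m v i"
      by blast
    then have "(\<Sum>i'<m. if condorcet_winner n m v i' then 1 else 0 :: real) = (\<Sum>i'<m. if i' = i then 1 else 0)"
      using condorcet_winner_unique[OF v] by (intro sum.cong) auto
    then show ?thesis
      using True \<open>i < m\<close> by (simp add: condorcet_winner_iff[OF v, symmetric])
  next
    case False
    then show ?thesis
      by (simp add: condorcet_winner_iff[OF v, symmetric])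
  qed
  then have "Pcw p n m = (\<Sum>v\<in>Pi\<^sub>E {..<n} (\<lambda>_. rankings m). \<Sum>i<m. (\<Prod>k<n. p (v k)) *
      (if \<forall>j\<in>{..<m} - {i}. 0 < normalized_sum (\<lambda>\<sigma> j. pref \<sigma> i j) n v j then 1 else 0))"
    unfolding Pcw_def by (intro sum.cong refl) (simp add: sum_distrib_left)
  also have "\<dots> = (\<Sum>i<m. \<Sum>v\<in>Pi\<^sub>E {..<n} (\<lambda>_. rankings m). (\<Prod>k<n. p (v k)) *
      (if \<forall>j\<in>{..<m} - {i}. 0 < normalized_sum (\<lambda>\<sigma> j. pref \<sigma> i j) n v j then 1 else 0))"
    by (rule sum.swap)
  finally show ?thesis
    by (simp add: iid_expectation_def)
qed

lemma tendsto_condorcet_winner_prob: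
  assumes p_nonneg: "\<forall>\<sigma>\<in>rankings m. 0 \<le> p \<sigma>" and p_sum: "(\<Sum>\<sigma>\<in>rankings m. p \<sigma>) = 1"
    and dual: "\<forall>\<sigma>\<in>rankings m. p (rev_rank m \<sigma>) = p \<sigma>" and "i < m"
  shows "(\<lambda>n. iid_expectation (rankings m) p n
            (\<lambda>v. if \<forall>j\<in>{..<m} - {i}. 0 < normalized_sum (\<lambda>\<sigma> j. pref \<sigma> i j) n v j then 1 else 0))
         \<longlonglongrightarrow> orthant_prob ({..<m} - {i}) (Rmat p m i)"
proof -
  define J where "J = {..<m} - {i}"
  have factorizable: "\<exists>A. \<forall>j\<in>J. \<forall>l\<in>J. (\<Sum>k\<in>J. A j k * A l k) = Rmat p m i j l"
    using gram_matrix_factorization[of J "rankings m" "\<lambda>j \<sigma>. sqrt (p \<sigma>) * pref \<sigma> i j"]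
      Rmat_eq_inner_on_if_dual[OF p_nonneg p_sum dual \<open>i < m\<close>]
    by (simp add: J_def finite_rankings)
  define A where "A = (SOME A. \<forall>j\<in>J. \<forall>l\<in>J. (\<Sum>k\<in>J. A j k * A l k) = Rmat p m i j l)"
  have A: "\<forall>j\<in>J. \<forall>l\<in>J. (\<Sum>k\<in>J. A j k * A l k) = Rmat p m i j l"
    unfolding A_def by (rule someI_ex[OF factorizable])
  interpret standardized_walk "rankings m" p "\<lambda>\<sigma> j. pref \<sigma> i j" J A
  proof
    show "\<forall>j\<in>J. (\<Sum>\<sigma>\<in>rankings m. p \<sigma> * pref \<sigma> i j) = 0"
      using lam_eq_0_if_dual[OF dual \<open>i < m\<close>] by (auto simp: J_def lam_def mult.commute)
    show "\<forall>j\<in>J. \<forall>l\<in>J. (\<Sum>k\<in>J. A j k * A l k) = (\<Sum>\<sigma>\<in>rankings m. p \<sigma> * pref \<sigma> i j * pref \<sigma> i l)"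
      using A Rmat_eq_if_dual[OF dual p_sum \<open>i < m\<close>] by (simp add: J_def)
    show "\<forall>j\<in>J. (\<Sum>\<sigma>\<in>rankings m. p \<sigma> * (pref \<sigma> i j)\<^sup>2) = 1"
      using p_sum by (simp add: pref_squared)
  qed (use p_nonneg p_sum finite_rankings in \<open>auto simp: J_def\<close>)
  have "orthant_prob J (Rmat p m i)
      = measure (std_gauss J) {w \<in> space (std_gauss J). \<forall>j\<in>J. 0 \<le> mat_apply A J w j}"
    unfolding orthant_prob_def A_def[symmetric] by (simp add: mat_apply_def)
  then show ?thesis
    using tendsto_orthant unfolding J_def by simp
qed

theorem mainTheorem3:
  fixes m :: nat and p :: "(nat \<Rightarrow> nat) \<Rightarrow> real"
  assumes m2: "m \<ge> 2"
    and p_nonneg: "\<forall>\<sigma>\<in>rankings m. p \<sigma> \<ge> 0"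
    and p_sum: "(\<Sum>\<sigma>\<in>rankings m. p \<sigma>) = 1"
    and dual: "\<forall>\<sigma>\<in>rankings m. p (rev_rank m \<sigma>) = p \<sigma>"
    and well_def: "\<forall>i<m. \<forall>j\<in>{..<m} - {i}. \<forall>l\<in>{..<m} - {i}. j \<noteq> l \<longrightarrow>
                     (1 - (lam p m i j)\<^sup>2) * (1 - (lam p m i l)\<^sup>2) \<noteq> 0"
  shows "(\<forall>i<m. \<forall>j<m. i \<noteq> j \<longrightarrow> lam p m i j = 0) \<and>
         (\<lambda>n. Pcw p n m) \<longlonglongrightarrow> (\<Sum>i<m. orthant_prob ({..<m} - {i}) (Rmat p m i))"
proof
  show "\<forall>i<m. \<forall>j<m. i \<noteq> j \<longrightarrow> lam p m i j = 0"
    using lam_eq_0_if_dual[OF dual] by blast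
  show "(\<lambda>n. Pcw p n m) \<longlonglongrightarrow> (\<Sum>i<m. orthant_prob ({..<m} - {i}) (Rmat p m i))"
    unfolding Pcw_eq_sum_iid_expectation
    by (intro tendsto_sum tendsto_condorcet_winner_prob[OF p_nonneg p_sum dual]) simp
qed

end
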